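(* Assume conditions (C1)–(C6). If $\zeta,\tilde\zeta\in\Theta$ satisfy $\liminf_{k\to\infty}\|\zeta_k-\tilde\zeta_k\|=0$, then the pair $\varphi_\zeta,\varphi_{\tilde\zeta}$ is proximal: for every $\epsilon>0$ and every $E\in\mathbb N$ there exists an integer $k_0$ such that $\|\varphi_\zeta(t)-\varphi_{\tilde\zeta}(t)\|<\epsilon$ for all $t\in[\theta_{2k_0-1},\theta_{2(k_0+E)}]\cap\mathbb T_0$.
   Context: Fix integers $m,n\ge1$ and $r\ge0$. Cells are indexed by pairs $(i,j)$, $1\le i\le m$, $1\le j\le n$. The $r$-neighbourhood of $(i,j)$ is $N_r(i,j)=\{(h,l):1\le h\le m,\ 1\le l\le n,\ \max(|h-i|,|l-j|)\le r\}$. Fix constants $a_{ij}>0$, $C^{hl}_{ij}\ge0$, and a continuous function $f:\mathbb R\to\mathbb R$. Vectors of $\mathbb R^{mn}$ are written $v=\{v_{ij}\}$, with norm $\|v\|=\max_{(i,j)}|v_{ij}|$. Time scale: $\{\theta_k\}_{k\in\mathbb Z}$ is strictly increasing, $\theta_{-1}<0<\theta_0$, and there exist $\omega>0$ and $p\in\mathbb N$ with $\theta_{k+2p}=\theta_k+\omega$ for all $k$. Set $\mathbb T_0=\bigcup_{k\in\mathbb Z}[\theta_{2k-1},\theta_{2k}]$, $\delta_k=\theta_{2k+1}-\theta_{2k}$, $\eta_k=\theta_{2k}-\theta_{2k-1}$ (both $p$-periodic in $k$), $\delta=\max_{1\le k\le p}\delta_k$. On $\mathbb T_0'=\mathbb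 T_0\setminus\{\theta_{2k-1}:k\in\mathbb Z\}$ define $\psi(t)=t-\sum_{0<\theta_{2k}<t}\delta_k$ for $t\ge0$ and $\psi(t)=t+\sum_{t\le\theta_{2k}<0}\delta_k$ for $t<0$; put $s_k=\psi(\theta_{2k})$, so $s_k-s_{k-1}=\eta_k$, and write $\psi(\omega):=\omega-\sum_{k=1}^p\delta_k=\sum_{k=1}^p\eta_k$. Inputs: $\Lambda\subset\mathbb R^{mn}$ is compact and $F:\Lambda\to\Lambda$ is continuous. $\Theta$ is the set of all sequences $\zeta=\{\zeta_k\}_{k\in\mathbb Z}$, $\zeta_k=\{\zeta^{ij}_k\}\in\Lambda$, with $\zeta_{k+1}=F(\zeta_k)$ for all $k\in\mathbb Z$. For $\zeta\in\Theta$, $L_{ij}(t,\zeta)=\zeta^{ij}_k$ for $t\in[\theta_{2k-1},\theta_{2k}]$. Network $(N_\zeta)$ on $\mathbb T_0$: $x^\Delta_{ij}(t)=-a_{ij}x_{ij}(t)-\sum_{(h,l)\in N_r(i,j)}C^{hl}_{ij}f(x_{hl}(t))x_{ij}(t)+L_{ij}(t,\zeta)$, $t\in\mathbb T_0$, where the $\Delta$-derivative at $\theta_{2k}$ is $(x(\theta_{2k+1})-x(\theta_{2k}))/\delta_k$ and elsewhere the ordinary derivative. Concretely, a solution on $\mathbb T_0$ is a function continuous and (one-sidedly at endpoints) differentiable on each $[\theta_{2k-1},\theta_{2k}]$ satisfying there $x_{ij}'=-a_{ij}x_{ij}-\sum_{(h,l)\in N_r(i,j)}C^{hl}_{ij}f(x_{hl})x_{ij}+\zeta^{ij}_k$,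 together with $x_{ij}(\theta_{2k+1})=(1-\delta_ka_{ij})x_{ij}(\theta_{2k})-\delta_k\sum_{(h,l)\in N_r(i,j)}C^{hl}_{ij}f(x_{hl}(\theta_{2k}))x_{ij}(\theta_{2k})+\delta_k\zeta^{ij}_k$. Impulsive system $(I_\zeta)$: for $s\in(s_{k-1},s_k)$, $y_{ij}'(s)=-a_{ij}y_{ij}(s)-\sum_{(h,l)\in N_r(i,j)}C^{hl}_{ij}f(y_{hl}(s))y_{ij}(s)+\zeta^{ij}_k$, and at $s=s_k$, $y_{ij}(s_k+)-y_{ij}(s_k)=-\delta_ka_{ij}y_{ij}(s_k)-\delta_k\sum_{(h,l)\in N_r(i,j)}C^{hl}_{ij}f(y_{hl}(s_k))y_{ij}(s_k)+\delta_k\zeta^{ij}_k$. Solutions are left-continuous, continuous except for discontinuities of the first kind at the $s_k$. Let $u_{ij}(s,\tau)=e^{-a_{ij}(s-\tau)}\prod_{\nu=l}^{k}(1-\delta_\nu a_{ij})$ if $s_{l-1}<\tau\le s_l$, $s_k<s\le s_{k+1}$, $k\ge l$, and $u_{ij}(s,\tau)=e^{-a_{ij}(s-\tau)}$ if $s_k<\tau\le s\le s_{k+1}$. Let $\lambda_{ij}=a_{ij}-\frac1{\psi(\omega)}\sum_{\nu=0}^{p-1}\ln|1-\delta_\nu a_{ij}|$, $\lambda=\min_{(i,j)}\lambda_{ij}$. Conditions: (C1) $\delta_ka_{ij}\ne1$ for all $i,j,k$; (C2) $\lambda>0$; (C3) $\sup_{s\in\mathbb R}|f(s)|\le M_f$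 for some $M_f>0$; (C4) $|f(s_1)-f(s_2)|\le L_f|s_1-s_2|$ for all $s_1,s_2$, for some $L_f>0$. Under (C1),(C2) fix positive numbers $K_{ij}$ with $|u_{ij}(s,\tau)|\le K_{ij}e^{-\lambda_{ij}(s-\tau)}$ for $s\ge\tau$. Define $\bar c=\max_{(i,j)}\big(\frac{K_{ij}}{\lambda_{ij}}+\frac{p\delta K_{ij}}{1-e^{-\lambda_{ij}\psi(\omega)}}\big)\sum_{(h,l)\in N_r(i,j)}C^{hl}_{ij}$, $M_F=\max_{\eta\in\Lambda}\|F(\eta)\|$, $H_0=\frac{M_F}{1-M_f\bar c}\max_{(i,j)}\big(\frac{K_{ij}}{\lambda_{ij}}+\frac{p\delta K_{ij}}{1-e^{-\lambda_{ij}\psi(\omega)}}\big)$, $\bar d=(M_f+H_0L_f)\max_{(i,j)}K_{ij}\sum_{(h,l)\in N_r(i,j)}C^{hl}_{ij}$. (C5) $(M_f+H_0L_f)\bar c<1$. (C6) $-\lambda+\bar d+\frac{p}{\psi(\omega)}\ln(1+\delta\bar d)<0$. Under (C1)–(C5), for $\zeta\in\Theta$ the system $(I_\zeta)$ has a unique solution $\phi_\zeta$ on $\mathbb R$ with $\sup_s\|\phi_\zeta(s)\|\le H_0$; define $\varphi_\zeta:\mathbb T_0\to\mathbb R^{mn}$ by $\varphi_\zeta(t)=\phi_\zeta(\psi(t))$ for $t\in\mathbb T_0'$ and $\varphi_\zeta(\theta_{2k+1})=\phi_\zeta(s_k+)$. Then $\varphi_\zeta$ is the unique solution of $(N_\zeta)$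 on $\mathbb T_0$ with $\sup_{t\in\mathbb T_0}\|\varphi_\zeta(t)\|\le H_0$. *)

theory Defs
  imports "HOL-Analysis.Analysis"
begin

text \<open>Vectors of R^{mn} are functions on index pairs (i,j); only the values on
  the index set {1..m} x {1..n} matter.\<close>

type_synonym vec = "nat \<times> nat \<Rightarrow> real"

definition idxset :: "nat \<Rightarrow> nat \<Rightarrow> (nat \<times> nat) set" where
  "idxset m n = {1..m} \<times> {1..n}"

definition Rmn :: "nat \<Rightarrow> nat \<Rightarrow> vec set" where
  "Rmn m n = {v. \<forall>q. q \<notin> idxset m n \<longrightarrow> v q = 0}"

definition vnorm :: "nat \<Rightarrow> nat \<Rightarrow> vec \<Rightarrow> real" where
  "vnorm m n v = Max ((\<lambda>q. \<bar>v q\<bar>) ` idxset m n)"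

definition nbhd :: "nat \<Rightarrow> nat \<Rightarrow> nat \<Rightarrow> nat \<times> nat \<Rightarrow> (nat \<times> nat) set" where
  "nbhd m n r q = {(h,l) \<in> idxset m n.
      \<bar>int h - int (fst q)\<bar> \<le> int r \<and> \<bar>int l - int (snd q)\<bar> \<le> int r}"

definition Tzero :: "(int \<Rightarrow> real) \<Rightarrow> real set" where
  "Tzero \<theta> = (\<Union>k. {\<theta> (2*k - 1) .. \<theta> (2*k)})"

definition dlt :: "(int \<Rightarrow> real) \<Rightarrow> int \<Rightarrow> real" where
  "dlt \<theta> k = \<theta> (2*k + 1) - \<theta> (2*k)"

definition eta :: "(int \<Rightarrow> real) \<Rightarrow> int \<Rightarrow> real" where
  "eta \<theta> k = \<theta> (2*k) - \<theta> (2*k - 1)"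

definition dmax :: "(int \<Rightarrow> real) \<Rightarrow> nat \<Rightarrow> real" where
  "dmax \<theta> p = Max (dlt \<theta> ` {1..int p})"

definition psi_om :: "(int \<Rightarrow> real) \<Rightarrow> nat \<Rightarrow> real" where
  "psi_om \<theta> p = (\<Sum>k\<in>{1..int p}. eta \<theta> k)"

definition psi :: "(int \<Rightarrow> real) \<Rightarrow> real \<Rightarrow> real" where
  "psi \<theta> t = (if 0 \<le> t
      then t - (\<Sum>k\<in>{k. 0 < \<theta> (2*k) \<and> \<theta> (2*k) < t}. dlt \<theta> k)
      else t + (\<Sum>k\<in>{k. t \<le> \<theta> (2*k) \<and> \<theta> (2*k) < 0}. dlt \<theta> k))"

definition sk :: "(int \<Rightarrow> real) \<Rightarrow> int \<Rightarrow> real" where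
  "sk \<theta> k = psi \<theta> (\<theta> (2*k))"

definition six :: "(int \<Rightarrow> real) \<Rightarrow> real \<Rightarrow> int" where
  "six \<theta> t = (THE l. sk \<theta> (l - 1) < t \<and> t \<le> sk \<theta> l)"

text \<open>u_ij(s,tau) for s >= tau, with a = a_ij: if s_{l-1} < tau <= s_l and
  s_k < s <= s_{k+1}, the product runs over nu = l..k (empty if k = l - 1).\<close>
definition uf :: "(int \<Rightarrow> real) \<Rightarrow> real \<Rightarrow> real \<Rightarrow> real \<Rightarrow> real" where
  "uf \<theta> a s \<tau> = exp (- a * (s - \<tau>)) *
      (\<Prod>\<nu>\<in>{six \<theta> \<tau> .. six \<theta> s - 1}. (1 - dlt \<theta> \<nu> * a))"

definition lam :: "(int \<Rightarrow> real) \<Rightarrow> nat \<Rightarrow> real \<Rightarrow> real" where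
  "lam \<theta> p a = a - (1 / psi_om \<theta> p) * (\<Sum>\<nu>\<in>{0..<int p}. ln \<bar>1 - dlt \<theta> \<nu> * a\<bar>)"

definition lammin :: "(int \<Rightarrow> real) \<Rightarrow> nat \<Rightarrow> nat \<Rightarrow> nat \<Rightarrow> (nat \<times> nat \<Rightarrow> real) \<Rightarrow> real" where
  "lammin \<theta> p m n a = Min ((\<lambda>q. lam \<theta> p (a q)) ` idxset m n)"

definition kfac :: "(int \<Rightarrow> real) \<Rightarrow> nat \<Rightarrow> (nat \<times> nat \<Rightarrow> real) \<Rightarrow> (nat \<times> nat \<Rightarrow> real)
    \<Rightarrow> nat \<times> nat \<Rightarrow> real" where
  "kfac \<theta> p a K q = K q / lam \<theta> p (a q)
      + real p * dmax \<theta> p * K q / (1 - exp (- lam \<theta> p (a q) * psi_om \<theta> p))"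

definition csum :: "nat \<Rightarrow> nat \<Rightarrow> nat \<Rightarrow> (nat \<times> nat \<Rightarrow> nat \<times> nat \<Rightarrow> real) \<Rightarrow> nat \<times> nat \<Rightarrow> real" where
  "csum m n r C q = (\<Sum>hl\<in>nbhd m n r q. C q hl)"

definition cbar where
  "cbar \<theta> p m n r a C K = Max ((\<lambda>q. kfac \<theta> p a K q * csum m n r C q) ` idxset m n)"

definition MF :: "nat \<Rightarrow> nat \<Rightarrow> vec set \<Rightarrow> (vec \<Rightarrow> vec) \<Rightarrow> real" where
  "MF m n \<Lambda> F = (SUP \<eta>\<in>\<Lambda>. vnorm m n (F \<eta>))"

definition H0 where
  "H0 \<theta> p m n r a C K Mf \<Lambda> F =
     MF m n \<Lambda> F / (1 - Mf * cbar \<theta> p m n r a C K) * Max (kfac \<theta> p a K ` idxset m n)"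

definition dbar where
  "dbar \<theta> p m n r a C K Mf Lf \<Lambda> F =
     (Mf + H0 \<theta> p m n r a C K Mf \<Lambda> F * Lf) * Max ((\<lambda>q. K q * csum m n r C q) ` idxset m n)"

definition Theta :: "vec set \<Rightarrow> (vec \<Rightarrow> vec) \<Rightarrow> (int \<Rightarrow> vec) set" where
  "Theta \<Lambda> F = {\<zeta>. \<forall>k. \<zeta> k \<in> \<Lambda> \<and> \<zeta> (k + 1) = F (\<zeta> k)}"

definition is_sol where
  "is_sol \<theta> m n r a C f \<zeta> x \<longleftrightarrow>
    (\<forall>k. \<forall>q\<in>idxset m n.
      (\<forall>t\<in>{\<theta> (2*k - 1) .. \<theta> (2*k)}.
         ((\<lambda>s. x s q) has_real_derivative
            (- a q * x t q - (\<Sum>hl\<in>nbhd m n r q. C q hl * f (x t hl)) * x t q + \<zeta> k q))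
         (at t within {\<theta> (2*k - 1) .. \<theta> (2*k)})) \<and>
      x (\<theta> (2*k + 1)) q =
         (1 - dlt \<theta> k * a q) * x (\<theta> (2*k)) q
         - dlt \<theta> k * (\<Sum>hl\<in>nbhd m n r q. C q hl * f (x (\<theta> (2*k)) hl)) * x (\<theta> (2*k)) q
         + dlt \<theta> k * \<zeta> k q)"

end

theory Submission
  imports Defs
begin

text \<open>Componentwise, the difference of two solutions solves a scalar linear impulsive equation
  whose forcing is the difference of the nonlinear terms (Lipschitz with constant \<open>Mf + H * Lf\<close>
  on bounded solutions) plus the difference of the inputs. Variation of constants and the
  exponential bound on \<open>u\<close> turn this into an a priori bound on \<open>exp (\<mu> * s) * \<bar>x - x'\<bar>\<close> along
  any window of segments. Since the input orbits come arbitrarily close and \<open>F\<close> is uniformly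
  continuous on the compact \<open>\<Lambda>\<close>, the inputs are \<open>\<eta>\<close>-close on arbitrarily long windows; there,
  by (C5), the weighted supremum \<open>V\<close> of the difference satisfies \<open>V \<le> A + c * V + \<eta> * B\<close> with
  \<open>c < 1\<close>, so the difference decays like \<open>exp (- \<mu> * s)\<close> inside the window and is below \<open>\<epsilon>\<close>
  on its last \<open>E + 1\<close> segments once the window is long and \<open>\<eta>\<close> is small.\<close>

lemma atLeastLessThan_int_plus1_insert:
  fixes b k :: int
  assumes "b \<le> k"
  shows "{b..<k+1} = insert k {b..<k}"
  using assms by auto

lemma sum_atLeastLessThan_int_telescope:
  fixes h :: "int \<Rightarrow> 'a::ab_group_add"
  assumes "b \<le> k"
  shows "(\<Sum>l\<in>{b..<k}. h l - h (l - 1)) = h (k - 1) - h (b - 1)"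
  using assms
proof (induction k rule: int_ge_induct)
  case (step i)
  then show ?case by (simp add: atLeastLessThan_int_plus1_insert)
qed simp

lemma periodic_int_add_mult:
  fixes h :: "int \<Rightarrow> 'a"
  assumes "\<And>k. h (k + P) = h k"
  shows "h (r + P * m) = h r"
proof (induction m rule: int_induct[where k=0])
  case (step1 i) then show ?case using assms[of "r + P*i"] by (simp add: algebra_simps)
next
  case (step2 i) then show ?case using assms[of "r + P*(i-1)"] by (simp add: algebra_simps)
qed simp

lemma sum_periodic_window:
  fixes h :: "int \<Rightarrow> 'a::comm_monoid_add"
  assumes "\<And>k. h (k + int p) = h k"
  shows "(\<Sum>k\<in>{l+1..l+int p}. h k) = (\<Sum>k\<in>{1..int p}. h k)"
proof -
  define A where "A l = (\<Sum>k\<in>{l+1..l+int p}. h k)" for l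
  have step: "A (l+1) = A l" for l
  proof (cases p)
    case (Suc q)
    have "{l+1..l+int p} = insert (l+1) {l+2..l+int p}"
      and "{l+1+1..l+1+int p} = insert (l+1+int p) {l+2..l+int p}" using Suc by auto
    then show ?thesis unfolding A_def using assms[of "l+1"] by (simp add: ac_simps)
  qed (simp add: A_def)
  have "A l = A 0"
    by (induction l rule: int_induct[where k=0]) (use step[of "_ - 1"] in \<open>simp_all add: step\<close>)
  then show ?thesis by (simp add: A_def)
qed

lemma sum_power_div_le:
  fixes r :: real
  assumes "0 \<le> r" "r < 1" "1 \<le> p"
  shows "(\<Sum>j<n. r ^ (j div p)) \<le> real p / (1 - r)"
proof -
  have blocks: "(\<Sum>j<p*N. r ^ (j div p)) = real p * (\<Sum>i<N. r ^ i)" for N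
  proof (induction N)
    case (Suc N)
    have "(\<Sum>j<p*Suc N. r ^ (j div p))
        = (\<Sum>j<p*N. r ^ (j div p)) + (\<Sum>j\<in>{p*N..<p*N+p}. r ^ (j div p))"
      by (simp add: lessThan_atLeast0 sum.atLeastLessThan_concat add.commute)
    moreover have "(\<Sum>j\<in>{p*N..<p*N+p}. r ^ (j div p)) = (\<Sum>j\<in>{p*N..<p*N+p}. r ^ N)"
    proof (rule sum.cong)
      fix j assume "j \<in> {p*N..<p*N+p}"
      then have "j div p = N" by (intro div_nat_eqI) auto
      then show "r ^ (j div p) = r ^ N" by simp
    qed simp
    ultimately show ?case using Suc by (simp add: algebra_simps)
  qed simp
  have "(\<Sum>j<n. r ^ (j div p)) \<le> (\<Sum>j<p*n. r ^ (j div p))"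
    by (rule sum_mono2) (use assms in auto)
  also have "\<dots> = real p * (\<Sum>i<n. r ^ i)" by (rule blocks)
  also have "\<dots> \<le> real p * (1 / (1 - r))"
    using assms by (intro mult_left_mono) (simp_all add: sum_gp_strict divide_right_mono)
  finally show ?thesis by simp
qed

lemma ex_nat_exp_decay_less:
  fixes A c \<epsilon> :: real
  assumes "0 \<le> A" "0 < c" "0 < \<epsilon>"
  obtains N :: nat where "exp (- c * real N) * A < \<epsilon>"
proof -
  obtain N :: nat where N: "ln (A/\<epsilon> + 1) / c < real N" using reals_Archimedean2 by blast
  have pos: "0 < A/\<epsilon> + 1" using assms by (simp add: add_nonneg_pos)
  have "ln (A/\<epsilon> + 1) < c * real N" using N assms(2) by (simp add: field_simps)
  then have "A/\<epsilon> + 1 < exp (c * real N)" using pos by (metis exp_less_mono exp_ln)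
  then have "A < \<epsilon> * exp (c * real N)" using assms(3) by (simp add: field_simps)
  then show ?thesis using that[of N] by (simp add: exp_minus field_simps)
qed

lemma ex_pos_mult_less:
  fixes B \<epsilon> :: real
  assumes "0 \<le> B" "0 < \<epsilon>"
  obtains \<eta> where "0 < \<eta>" "\<eta> * B < \<epsilon>"
proof
  show "0 < \<epsilon> / (B + 1)" using assms by simp
  have "\<epsilon> / (B + 1) * B < \<epsilon> / (B + 1) * (B + 1)"
    using assms by (intro mult_strict_left_mono) simp_all
  then show "\<epsilon> / (B + 1) * B < \<epsilon>" using assms by simp
qed

lemma has_integral_linear_ode_quotient:
  fixes y g :: "real \<Rightarrow> real"
  assumes "\<alpha> \<le> t" "t \<le> \<beta>"
    and y': "\<And>x. x \<in> {\<alpha>..\<beta>} \<Longrightarrow> (y has_real_derivative (- a * y x + g x)) (at x within {\<alpha>..\<beta>})"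
    and "c \<noteq> 0"
  shows "((\<lambda>x. g x / (c * exp (- a * x))) has_integral
           (y t / (c * exp (- a * t)) - y \<alpha> / (c * exp (- a * \<alpha>)))) {\<alpha>..t}"
proof -
  have eq: "\<And>x. g x / (c * exp (- a * x)) = g x * exp (a * x) / c"
    "\<And>x. y x / (c * exp (- a * x)) = y x * exp (a * x) / c"
    using \<open>c \<noteq> 0\<close> by (simp_all add: exp_minus field_simps)
  have "((\<lambda>x. y x * exp (a * x) / c) has_vector_derivative g x * exp (a * x) / c) (at x within {\<alpha>..t})"
    if x: "x \<in> {\<alpha>..t}" for x
  proof -
    have "(y has_real_derivative (- a * y x + g x)) (at x within {\<alpha>..t})"
      by (rule DERIV_subset[OF y']) (use x assms in auto)
    then have "((\<lambda>x. y x * exp (a * x) / c) has_real_derivative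
        (((- a * y x + g x) * exp (a * x) + exp (a * x) * a * y x) / c)) (at x within {\<alpha>..t})"
      using \<open>c \<noteq> 0\<close> by (auto intro!: derivative_eq_intros)
    then show ?thesis by (simp add: has_real_derivative_iff_has_vector_derivative algebra_simps)
  qed
  from fundamental_theorem_of_calculus[OF assms(1) this] show ?thesis unfolding eq by simp
qed

lemma has_integral_abs_mult_le:
  fixes f h :: "real \<Rightarrow> real"
  assumes "(f has_integral I) X" "(h has_integral J) X" "\<And>x. x \<in> X \<Longrightarrow> \<bar>c * f x\<bar> \<le> h x"
  shows "\<bar>c\<bar> * \<bar>I\<bar> \<le> J"
proof -
  have cf: "((\<lambda>x. c * f x) has_integral (c * I)) X" by (rule has_integral_mult_right[OF assms(1)])
  have "c * I \<le> J"
    by (rule has_integral_le[OF cf assms(2)]) (use assms(3) in \<open>auto simp: abs_le_iff\<close>)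
  moreover have "- J \<le> c * I"
    by (rule has_integral_le[OF has_integral_neg[OF assms(2)] cf]) (use assms(3) in \<open>force simp: abs_le_iff\<close>)
  ultimately show ?thesis by (simp add: abs_mult[symmetric] abs_le_iff)
qed

lemma compact_continuous_pos_imp_bounded_below:
  fixes \<Psi> :: "'a::topological_space \<Rightarrow> real"
  assumes "compact S" "continuous_on S \<Psi>" "\<And>z. z \<in> S \<Longrightarrow> 0 < \<Psi> z"
  shows "\<exists>d>0. \<forall>z\<in>S. d \<le> \<Psi> z"
proof (cases "S = {}")
  case False
  then obtain z0 where "z0 \<in> S" "\<And>z. z \<in> S \<Longrightarrow> \<Psi> z0 \<le> \<Psi> z"
    using continuous_attains_inf[OF assms(1) _ assms(2)] by blast
  then show ?thesis using assms(3) by blast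
qed (auto intro: exI[of _ 1])

lemma compact_less_near_zeros:
  fixes \<Gamma> \<Psi> :: "'a::topological_space \<Rightarrow> real"
  assumes S: "compact S" "continuous_on S \<Gamma>" "continuous_on S \<Psi>"
    and \<Psi>: "\<And>z. z \<in> S \<Longrightarrow> 0 \<le> \<Psi> z" and zeros: "\<And>z. z \<in> S \<Longrightarrow> \<Psi> z = 0 \<Longrightarrow> \<Gamma> z < \<eta>"
  obtains d where "0 < d" "\<And>z. z \<in> S \<Longrightarrow> \<Psi> z < d \<Longrightarrow> \<Gamma> z < \<eta>"
proof -
  define T where "T = S \<inter> \<Gamma> -` {\<eta>..}"
  have "compact T"
    unfolding T_def by (rule closedin_compact[OF S(1) continuous_closedin_preimage[OF S(2)]]) simp
  moreover have "continuous_on T \<Psi>" by (rule continuous_on_subset[OF S(3)]) (auto simp: T_def)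
  moreover have "0 < \<Psi> z" if "z \<in> T" for z
    using \<Psi>[of z] zeros[of z] that unfolding T_def by fastforce
  ultimately have "\<exists>d>0. \<forall>z\<in>T. d \<le> \<Psi> z" by (rule compact_continuous_pos_imp_bounded_below)
  then obtain d where d: "0 < d" "\<And>z. z \<in> T \<Longrightarrow> d \<le> \<Psi> z" by blast
  show ?thesis
  proof (rule that[OF d(1)])
    fix z assume "z \<in> S" "\<Psi> z < d"
    then show "\<Gamma> z < \<eta>" using d(2)[of z] unfolding T_def by fastforce
  qed
qed

lemma funpow_continuous_on:
  assumes "continuous_on L F" "F ` L \<subseteq> L"
  shows "continuous_on L (F ^^ j) \<and> (F ^^ j) ` L \<subseteq> L"
proof (induction j)
  case (Suc j)
  then have "continuous_on L (F \<circ> (F ^^ j))"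
    by (intro continuous_on_compose) (auto intro: continuous_on_subset[OF assms(1)])
  then show ?case using Suc assms(2) by auto
qed (simp add: continuous_on_id)


section \<open>The maximum norm and the input orbits\<close>

lemma finite_idxset: "finite (idxset m n)"
  unfolding idxset_def by simp

lemma idxset_nonempty: "1 \<le> m \<Longrightarrow> 1 \<le> n \<Longrightarrow> idxset m n \<noteq> {}"
  unfolding idxset_def by auto

lemma abs_le_vnorm: "q \<in> idxset m n \<Longrightarrow> \<bar>v q\<bar> \<le> vnorm m n v"
  unfolding vnorm_def by (intro Max_ge) (auto simp: finite_idxset)

lemma vnorm_le_iff:
  "1 \<le> m \<Longrightarrow> 1 \<le> n \<Longrightarrow> vnorm m n v \<le> e \<longleftrightarrow> (\<forall>q\<in>idxset m n. \<bar>v q\<bar> \<le> e)"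
  unfolding vnorm_def by (simp add: finite_idxset idxset_nonempty)

lemma vnorm_less_iff:
  "1 \<le> m \<Longrightarrow> 1 \<le> n \<Longrightarrow> vnorm m n v < e \<longleftrightarrow> (\<forall>q\<in>idxset m n. \<bar>v q\<bar> < e)"
  unfolding vnorm_def by (simp add: finite_idxset idxset_nonempty)

lemma abs_le_sum_abs_idxset:
  fixes v :: vec
  shows "q \<in> idxset m n \<Longrightarrow> \<bar>v q\<bar> \<le> (\<Sum>q\<in>idxset m n. \<bar>v q\<bar>)"
  using member_le_sum[of q "idxset m n" "\<lambda>q. \<bar>v q\<bar>"] by (simp add: finite_idxset)

lemma sum_abs_le_card_vnorm:
  fixes v :: vec
  shows "(\<Sum>q\<in>idxset m n. \<bar>v q\<bar>) \<le> real (card (idxset m n)) * vnorm m n v"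
  using sum_bounded_above[of "idxset m n" "\<lambda>q. \<bar>v q\<bar>"] abs_le_vnorm[of _ m n v] by simp

lemma mult_vnorm_le:
  assumes "1 \<le> m" "1 \<le> n" "\<And>q. q \<in> idxset m n \<Longrightarrow> e * \<bar>v q\<bar> \<le> R" "0 < e"
  shows "e * vnorm m n v \<le> R"
proof -
  have "vnorm m n v \<le> R / e"
    unfolding vnorm_le_iff[OF assms(1,2)] using assms(3,4) by (simp add: mult.commute pos_le_divide_eq)
  then show ?thesis using assms(4) by (simp add: mult.commute pos_le_divide_eq)
qed

lemma vnorm_nonneg:
  assumes "1 \<le> m" "1 \<le> n"
  shows "0 \<le> vnorm m n v"
proof -
  obtain q where "q \<in> idxset m n" using idxset_nonempty[OF assms] by blast
  from order_trans[OF abs_ge_zero abs_le_vnorm[OF this]] show ?thesis .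
qed

lemma continuous_on_funpow_coordinate:
  fixes F :: "vec \<Rightarrow> vec"
  assumes "continuous_on L F" "F ` L \<subseteq> L" "continuous_on S h" "h ` S \<subseteq> L"
  shows "continuous_on S (\<lambda>z. (F ^^ j) (h z) q)"
proof -
  have "continuous_on S ((F ^^ j) \<circ> h)"
    using funpow_continuous_on[OF assms(1,2), of j] assms(3,4)
    by (intro continuous_on_compose) (auto intro: continuous_on_subset)
  from continuous_on_product_then_coordinatewise[OF this, of q] show ?thesis by (simp add: comp_def)
qed

lemma funpow_uniformly_close:
  fixes L :: "vec set" and F :: "vec \<Rightarrow> vec"
  assumes mn: "1 \<le> m" "1 \<le> n"
    and L: "compact L" "L \<subseteq> Rmn m n" "continuous_on L F" "F ` L \<subseteq> L" and "0 < \<eta>"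
  obtains \<delta> where "0 < \<delta>"
    "\<And>u v j. u \<in> L \<Longrightarrow> v \<in> L \<Longrightarrow> vnorm m n (u - v) < \<delta> \<Longrightarrow> j \<le> N \<Longrightarrow>
       vnorm m n ((F ^^ j) u - (F ^^ j) v) < \<eta>"
proof -
  define I where "I = idxset m n"
  define \<Gamma> where "\<Gamma> z = (\<Sum>j<Suc N. \<Sum>q\<in>I. \<bar>(F ^^ j) (fst z) q - (F ^^ j) (snd z) q\<bar>)" for z
  define \<Psi> where "\<Psi> z = (\<Sum>q\<in>I. \<bar>fst z q - snd z q\<bar>)" for z :: "vec \<times> vec"
  have "continuous_on (L \<times> L) fst" "continuous_on (L \<times> L) snd"
    by (auto intro: continuous_on_fst continuous_on_snd continuous_on_id)
  note coord = continuous_on_funpow_coordinate[OF L(3,4) this(1)] continuous_on_funpow_coordinate[OF L(3,4) this(2)]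
  have cont: "continuous_on (L \<times> L) \<Gamma>" "continuous_on (L \<times> L) \<Psi>"
    unfolding \<Gamma>_def \<Psi>_def using coord(1)[of 0] coord(2)[of 0] coord
    by (intro continuous_intros; force)+
  have "\<Gamma> z < \<eta>" if z: "z \<in> L \<times> L" "\<Psi> z = 0" for z
  proof -
    have "\<forall>q\<in>I. fst z q = snd z q"
      using z(2) unfolding \<Psi>_def I_def by (simp add: sum_nonneg_eq_0_iff finite_idxset)
    moreover have "fst z \<in> Rmn m n" "snd z \<in> Rmn m n" using z(1) L(2) by auto
    ultimately have "fst z = snd z" unfolding Rmn_def I_def by (auto intro!: ext)
    then show ?thesis using \<open>0 < \<eta>\<close> unfolding \<Gamma>_def by simp
  qed
  moreover have "0 \<le> \<Psi> z" for z unfolding \<Psi>_def by (simp add: sum_nonneg)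
  ultimately obtain d where d: "0 < d" "\<And>z. z \<in> L \<times> L \<Longrightarrow> \<Psi> z < d \<Longrightarrow> \<Gamma> z < \<eta>"
    using compact_less_near_zeros[OF compact_Times[OF L(1) L(1)] cont] by blast
  show ?thesis
  proof
    show "0 < d / (real (card I) + 1)" using d by simp
    fix u v j assume uv: "u \<in> L" "v \<in> L" "vnorm m n (u - v) < d / (real (card I) + 1)" "j \<le> N"
    have "\<Psi> (u, v) \<le> real (card I) * vnorm m n (u - v)"
      using sum_abs_le_card_vnorm[where v = "u - v"] unfolding \<Psi>_def I_def by simp
    also have "\<dots> \<le> real (card I) * (d / (real (card I) + 1))"
      using uv(3) by (intro mult_left_mono) auto
    also have "\<dots> < d" using d(1) by (simp add: field_simps)
    finally have "\<Gamma> (u, v) < \<eta>" using d(2) uv by simp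
    moreover have "\<bar>(F ^^ j) u q - (F ^^ j) v q\<bar> \<le> \<Gamma> (u, v)" if "q \<in> I" for q
    proof -
      have "\<bar>(F ^^ j) u q - (F ^^ j) v q\<bar> \<le> (\<Sum>q\<in>I. \<bar>(F ^^ j) u q - (F ^^ j) v q\<bar>)"
        using abs_le_sum_abs_idxset[of q m n "(F ^^ j) u - (F ^^ j) v"] that unfolding I_def by simp
      also have "\<dots> \<le> \<Gamma> (u, v)" unfolding \<Gamma>_def fst_conv snd_conv
        by (rule member_le_sum[of j "{..<Suc N}" "\<lambda>j. \<Sum>q\<in>I. \<bar>(F ^^ j) u q - (F ^^ j) v q\<bar>"])
           (use uv in \<open>auto intro: sum_nonneg\<close>)
      finally show ?thesis .
    qed
    ultimately show "vnorm m n ((F ^^ j) u - (F ^^ j) v) < \<eta>"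
      unfolding vnorm_less_iff[OF mn] I_def[symmetric] by (auto intro: le_less_trans)
  qed
qed

lemma Theta_add_funpow:
  assumes "\<zeta> \<in> Theta \<Lambda> F"
  shows "\<zeta> (b + int j) = (F ^^ j) (\<zeta> b)"
proof (induction j)
  case (Suc j)
  have "b + int (Suc j) = (b + int j) + 1" by simp
  moreover have "\<zeta> ((b + int j) + 1) = F (\<zeta> (b + int j))" using assms unfolding Theta_def by blast
  ultimately show ?case using Suc by (simp only: funpow.simps comp_def)
qed simp

lemma Liminf_zero_imp_less:
  fixes w :: "int \<Rightarrow> real"
  assumes "Liminf at_top (\<lambda>k. ereal (w k)) = 0" "0 < \<delta>"
  obtains b where "w b < \<delta>"
proof (rule ccontr)
  assume "\<not> thesis"
  then have "\<forall>k. \<delta> \<le> w k" using that by (meson not_le)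
  then have "ereal \<delta> \<le> Liminf at_top (\<lambda>k. ereal (w k))"
    unfolding le_Liminf_iff by (auto intro!: always_eventually elim: less_le_trans)
  then show False using assms by simp
qed

lemma Theta_liminf_window_close:
  assumes mn: "1 \<le> m" "1 \<le> n"
    and L: "compact \<Lambda>" "\<Lambda> \<subseteq> Rmn m n" "continuous_on \<Lambda> F" "F ` \<Lambda> \<subseteq> \<Lambda>"
    and \<zeta>: "\<zeta> \<in> Theta \<Lambda> F" "\<zeta>' \<in> Theta \<Lambda> F"
    and liminf: "Liminf at_top (\<lambda>k. ereal (vnorm m n (\<zeta> k - \<zeta>' k))) = 0" and "0 < \<eta>"
  obtains b where "\<And>k. b \<le> k \<Longrightarrow> k \<le> b + int N \<Longrightarrow> vnorm m n (\<zeta> k - \<zeta>' k) < \<eta>"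
proof -
  obtain \<delta> where \<delta>: "0 < \<delta>" "\<And>u v j. u \<in> \<Lambda> \<Longrightarrow> v \<in> \<Lambda> \<Longrightarrow> vnorm m n (u - v) < \<delta> \<Longrightarrow> j \<le> N \<Longrightarrow>
       vnorm m n ((F ^^ j) u - (F ^^ j) v) < \<eta>"
    using funpow_uniformly_close[OF mn L \<open>0 < \<eta>\<close>] by blast
  obtain b where b: "vnorm m n (\<zeta> b - \<zeta>' b) < \<delta>" using Liminf_zero_imp_less[OF liminf \<delta>(1)] .
  have "vnorm m n (\<zeta> k - \<zeta>' k) < \<eta>" if "b \<le> k" "k \<le> b + int N" for k
  proof -
    define j where "j = nat (k - b)"
    have j: "k = b + int j" "j \<le> N" using that unfolding j_def by auto
    have "\<zeta> b \<in> \<Lambda>" "\<zeta>' b \<in> \<Lambda>" using \<zeta> unfolding Theta_def by auto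
    then show ?thesis using \<delta>(2)[OF _ _ b j(2)] unfolding j(1) Theta_add_funpow[OF \<zeta>(1)] Theta_add_funpow[OF \<zeta>(2)]
      by blast
  qed
  then show ?thesis using that by blast
qed

lemma nonlinearity_difference_le:
  fixes X Y :: vec and f :: "real \<Rightarrow> real" and c :: "nat \<times> nat \<Rightarrow> real"
  assumes f: "\<And>s. \<bar>f s\<bar> \<le> Mf" "\<And>s1 s2. \<bar>f s1 - f s2\<bar> \<le> Lf * \<bar>s1 - s2\<bar>" and "0 \<le> Lf"
    and close: "\<And>hl. hl \<in> Nb \<Longrightarrow> \<bar>X hl - Y hl\<bar> \<le> w" "\<bar>X q - Y q\<bar> \<le> w" and "\<bar>Y q\<bar> \<le> H"
    and c: "\<And>hl. 0 \<le> c hl"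
  shows "\<bar>(\<Sum>hl\<in>Nb. c hl * f (X hl)) * X q - (\<Sum>hl\<in>Nb. c hl * f (Y hl)) * Y q\<bar>
           \<le> (Mf + H * Lf) * (\<Sum>hl\<in>Nb. c hl) * w"
proof -
  have term_le: "\<bar>f (X hl) * X q - f (Y hl) * Y q\<bar> \<le> (Mf + H * Lf) * w" if "hl \<in> Nb" for hl
  proof -
    have "f (X hl) * X q - f (Y hl) * Y q = f (X hl) * (X q - Y q) + (f (X hl) - f (Y hl)) * Y q"
      by (simp add: algebra_simps)
    then have "\<bar>f (X hl) * X q - f (Y hl) * Y q\<bar> \<le> \<bar>f (X hl)\<bar> * \<bar>X q - Y q\<bar> + \<bar>f (X hl) - f (Y hl)\<bar> * \<bar>Y q\<bar>"
      by (metis abs_mult abs_triangle_ineq)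
    also have "\<dots> \<le> Mf * w + (Lf * w) * H"
    proof (intro add_mono mult_mono)
      show "\<bar>f (X hl) - f (Y hl)\<bar> \<le> Lf * w"
        using f(2)[of "X hl" "Y hl"] mult_left_mono[OF close(1)[OF that] \<open>0 \<le> Lf\<close>] by linarith
      show "0 \<le> Lf * w" using \<open>0 \<le> Lf\<close> close(2) by simp
    qed (use f(1) close(2) \<open>\<bar>Y q\<bar> \<le> H\<close> order_trans[OF abs_ge_zero f(1)] in auto)
    finally show ?thesis by (simp add: algebra_simps)
  qed
  have "(\<Sum>hl\<in>Nb. c hl * f (X hl)) * X q - (\<Sum>hl\<in>Nb. c hl * f (Y hl)) * Y q
      = (\<Sum>hl\<in>Nb. c hl * f (X hl) * X q - c hl * f (Y hl) * Y q)"
    by (simp add: sum_subtractf sum_distrib_right)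
  also have "\<dots> = (\<Sum>hl\<in>Nb. c hl * (f (X hl) * X q - f (Y hl) * Y q))"
    by (simp add: algebra_simps)
  also have "\<bar>\<dots>\<bar> \<le> (\<Sum>hl\<in>Nb. c hl * ((Mf + H * Lf) * w))"
    using term_le c by (intro order_trans[OF sum_abs] sum_mono) (simp add: abs_mult mult_left_mono)
  also have "\<dots> = (Mf + H * Lf) * (\<Sum>hl\<in>Nb. c hl) * w"
    by (simp add: sum_distrib_left sum_distrib_right mult_ac)
  finally show ?thesis .
qed

section \<open>The periodic time scale\<close>

locale periodic_time_scale =
  fixes \<theta> :: "int \<Rightarrow> real" and p :: nat and \<omega> :: real
  assumes strict_mono_theta: "strict_mono \<theta>" and theta_minus1_neg: "\<theta> (-1) < 0"
    and theta_0_pos: "0 < \<theta> 0" and p_pos: "1 \<le> p"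
    and theta_periodic: "\<And>k. \<theta> (k + 2 * int p) = \<theta> k + \<omega>"
begin

abbreviation seg :: "int \<Rightarrow> real set" where
  "seg k \<equiv> {\<theta> (2*k - 1) .. \<theta> (2*k)}"

lemma theta_less_iff: "\<theta> i < \<theta> j \<longleftrightarrow> i < j"
  using strict_mono_theta by (simp add: strict_mono_less)

lemma theta_le_iff: "\<theta> i \<le> \<theta> j \<longleftrightarrow> i \<le> j"
  using strict_mono_theta by (simp add: strict_mono_less_eq)

lemma seg_left_mem: "\<theta> (2*k - 1) \<in> seg k" and seg_right_mem: "\<theta> (2*k) \<in> seg k"
  by (simp_all add: theta_le_iff)

lemma Tzero_iff: "t \<in> Tzero \<theta> \<longleftrightarrow> (\<exists>k. t \<in> seg k)"
  unfolding Tzero_def by blast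

lemma dlt_pos: "0 < dlt \<theta> k"
  unfolding dlt_def by (simp add: theta_less_iff)

lemma eta_pos: "0 < eta \<theta> k"
  unfolding eta_def by (simp add: theta_less_iff)

lemma dlt_periodic: "dlt \<theta> (k + int p) = dlt \<theta> k"
  using theta_periodic[of "2*k+1"] theta_periodic[of "2*k"] unfolding dlt_def by (simp add: algebra_simps)

lemma eta_periodic: "eta \<theta> (k + int p) = eta \<theta> k"
  using theta_periodic[of "2*k-1"] theta_periodic[of "2*k"] unfolding eta_def by (simp add: algebra_simps)

lemma theta_even_pos_iff: "0 < \<theta> (2*k) \<longleftrightarrow> 0 \<le> k"
proof
  assume "0 < \<theta> (2*k)"
  then have "\<not> \<theta> (2*k) < \<theta> (-1)" using theta_minus1_neg by simp
  then show "0 \<le> k" by (simp add: theta_less_iff)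
next
  assume "0 \<le> k"
  then show "0 < \<theta> (2*k)" using theta_0_pos theta_le_iff[of 0 "2*k"] by simp
qed

lemma sk_eq: "sk \<theta> k = \<theta> (2*k) - (\<Sum>l\<in>{0..<k}. dlt \<theta> l) + (\<Sum>l\<in>{k..<0}. dlt \<theta> l)"
proof (cases "0 \<le> k")
  case True
  have "{k'. 0 < \<theta> (2*k') \<and> \<theta> (2*k') < \<theta> (2*k)} = {0..<k}"
    by (auto simp: theta_even_pos_iff theta_less_iff)
  then show ?thesis unfolding sk_def psi_def using True theta_even_pos_iff[of k] by simp
next
  case False
  have neg: "\<theta> (2*k') < 0 \<longleftrightarrow> k' < 0" for k'
    using theta_even_pos_iff[of k'] theta_less_iff[of "2*k'" "-1"] theta_minus1_neg by linarith
  have "{k'. \<theta> (2*k) \<le> \<theta> (2*k') \<and> \<theta> (2*k') < 0} = {k..<0}"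
    by (auto simp: neg theta_le_iff)
  then show ?thesis unfolding sk_def psi_def using False neg[of k] by simp
qed

lemma sk_diff: "sk \<theta> k - sk \<theta> (k - 1) = eta \<theta> k"
proof -
  consider "1 \<le> k" | "k = 0" | "k \<le> -1" by linarith
  then show ?thesis
  proof cases
    case 1
    then have "{0..<k} = insert (k-1) {0..<k-1}" "{k..<0} = {}" "{k-1..<0} = {}" by auto
    then show ?thesis unfolding sk_eq eta_def dlt_def by (simp add: algebra_simps)
  next
    case 2
    have "{-1..<0::int} = {-1}" by auto
    then show ?thesis unfolding sk_eq eta_def dlt_def 2 by simp
  next
    case 3
    then have "{k-1..<0} = insert (k-1) {k..<0}" "{0..<k} = {}" "{0..<k-1} = {}" by auto
    then show ?thesis unfolding sk_eq eta_def dlt_def by (simp add: algebra_simps)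
  qed
qed

lemma sk_add_eq_sum_eta: "sk \<theta> (l + int j) = sk \<theta> l + (\<Sum>k\<in>{l+1..l+int j}. eta \<theta> k)"
proof (induction j)
  case (Suc j)
  have "{l+1..l+int (Suc j)} = insert (l + int j + 1) {l+1..l+int j}" by auto
  then show ?case using Suc sk_diff[of "l + int j + 1"] by (simp add: algebra_simps)
qed simp

lemma sk_less: "i < j \<Longrightarrow> sk \<theta> i < sk \<theta> j"
  using sk_add_eq_sum_eta[of i "nat (j - i)"] eta_pos
  by (simp add: sum_pos)

lemma sk_mono: "i \<le> j \<Longrightarrow> sk \<theta> i \<le> sk \<theta> j"
  using sk_less[of i j] by (cases "i = j") auto

lemma sk_add_period: "sk \<theta> (l + int p) = sk \<theta> l + psi_om \<theta> p"
  using sk_add_eq_sum_eta[of l p] sum_periodic_window[of "eta \<theta>" p l] eta_periodic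
  unfolding psi_om_def by simp

lemma sk_add_periods: "sk \<theta> (l + int p * int j) = sk \<theta> l + real j * psi_om \<theta> p"
proof (induction j)
  case (Suc j)
  have "l + int p * int (Suc j) = (l + int p * int j) + int p" by (simp add: algebra_simps)
  then show ?case using sk_add_period[of "l + int p * int j"] Suc by (simp add: algebra_simps)
qed simp

lemma psi_om_pos: "0 < psi_om \<theta> p"
  using sk_less[of 0 "int p"] sk_add_period[of 0] p_pos by simp

lemma periodic_representative:
  obtains r j where "r \<in> {1..int p}" "k = r + int p * j"
proof
  have "0 \<le> (k - 1) mod int p" "(k - 1) mod int p < int p" using p_pos by simp_all
  then show "(k - 1) mod int p + 1 \<in> {1..int p}" unfolding atLeastAtMost_iff by linarith
  show "k = ((k - 1) mod int p + 1) + int p * ((k - 1) div int p)"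
    by (metis add.commute add.left_commute diff_add_cancel mod_mult_div_eq mult.commute)
qed

lemma dlt_le_dmax: "dlt \<theta> k \<le> dmax \<theta> p"
proof -
  obtain r j where r: "r \<in> {1..int p}" "k = r + int p * j" by (rule periodic_representative)
  then have "dlt \<theta> k = dlt \<theta> r" using periodic_int_add_mult[of "dlt \<theta>"] dlt_periodic by simp
  then show ?thesis unfolding dmax_def using r(1) by (simp add: Max_ge)
qed

lemma eta_le_psi_om: "eta \<theta> k \<le> psi_om \<theta> p"
proof -
  obtain r j where r: "r \<in> {1..int p}" "k = r + int p * j" by (rule periodic_representative)
  then have "eta \<theta> k = eta \<theta> r" using periodic_int_add_mult[of "eta \<theta>"] eta_periodic by simp
  also have "\<dots> \<le> psi_om \<theta> p" unfolding psi_om_def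
    using r(1) by (intro member_le_sum) (auto intro: less_imp_le eta_pos)
  finally show ?thesis .
qed

lemma dmax_pos: "0 < dmax \<theta> p"
  using dlt_le_dmax[of 0] dlt_pos[of 0] by simp

lemma six_eqI: "sk \<theta> (k - 1) < s \<Longrightarrow> s \<le> sk \<theta> k \<Longrightarrow> six \<theta> s = k"
  unfolding six_def
proof (rule the_equality)
  fix l assume "sk \<theta> (l - 1) < s \<and> s \<le> sk \<theta> l" "sk \<theta> (k - 1) < s" "s \<le> sk \<theta> k"
  then have "\<not> sk \<theta> l \<le> sk \<theta> (k - 1)" "\<not> sk \<theta> k \<le> sk \<theta> (l - 1)" by auto
  then show "l = k" using sk_mono[of l "k - 1"] sk_mono[of k "l - 1"] by linarith
qed simp

text \<open>\<open>psi_seg k\<close> is the paper's \<open>\<psi>\<close> on the segment \<open>seg k\<close>: a translation onto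
  \<open>[sk (k - 1), sk k]\<close>.\<close>

definition psi_seg :: "int \<Rightarrow> real \<Rightarrow> real" where
  "psi_seg k t = t - \<theta> (2*k) + sk \<theta> k"

lemma psi_seg_bounds: "t \<in> seg k \<Longrightarrow> sk \<theta> (k - 1) \<le> psi_seg k t \<and> psi_seg k t \<le> sk \<theta> k"
  using sk_diff[of k] unfolding psi_seg_def eta_def by auto

lemma psi_seg_right [simp]: "psi_seg k (\<theta> (2*k)) = sk \<theta> k"
  unfolding psi_seg_def by simp

lemma psi_seg_left [simp]: "psi_seg k (\<theta> (2*k - 1)) = sk \<theta> (k - 1)"
  using sk_diff[of k] unfolding psi_seg_def eta_def by simp

lemma psi_seg_next: "psi_seg (k + 1) (\<theta> (2*k + 1)) = sk \<theta> k"
  using psi_seg_left[of "k + 1"] by (simp add: add.commute)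

lemma six_pair_with_gap:
  assumes "l \<le> k" and D: "(if l = k then 0 else sk \<theta> (k - 1) - sk \<theta> l) < D" "D < sk \<theta> k - sk \<theta> (l - 1)"
  obtains s \<tau> where "six \<theta> s = k" "six \<theta> \<tau> = l" "s - \<tau> = D"
proof (cases "D \<le> sk \<theta> k - sk \<theta> l")
  case True
  have "sk \<theta> l < sk \<theta> l + D"
    using D(1) sk_mono[of l "k - 1"] assms(1) by (auto split: if_splits)
  then have "sk \<theta> (k - 1) < sk \<theta> l + D"
    using D(1) sk_less[of "k - 1" k] by (auto split: if_splits)
  then have "six \<theta> (sk \<theta> l + D) = k" using True by (intro six_eqI) simp_all
  moreover have "six \<theta> (sk \<theta> l) = l" using sk_less[of "l - 1" l] by (intro six_eqI) simp_all
  ultimately show ?thesis using that by fastforce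
next
  case False
  have "six \<theta> (sk \<theta> k) = k" using sk_less[of "k - 1" k] by (intro six_eqI) simp_all
  moreover have "six \<theta> (sk \<theta> k - D) = l" using False D by (intro six_eqI) simp_all
  ultimately show ?thesis using that by fastforce
qed

text \<open>The bound on \<open>uf\<close> is only assumed at pairs of times; it transfers to the closure of the
  set of their gaps, which is what makes the endpoint cases \<open>D = sk (k-1) - sk l\<close> available.\<close>

lemma prod_exp_le_of_uf_le:
  assumes uf_le: "\<And>s \<tau>. \<tau> \<le> s \<Longrightarrow> \<bar>uf \<theta> a s \<tau>\<bar> \<le> Kc * exp (- lm * (s - \<tau>))"
    and "l \<le> k" "0 \<le> D" "sk \<theta> (k - 1) - sk \<theta> l \<le> D" "D \<le> sk \<theta> k - sk \<theta> (l - 1)"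
  shows "\<bar>\<Prod>\<nu>\<in>{l..<k}. 1 - dlt \<theta> \<nu> * a\<bar> * exp (- a * D) \<le> Kc * exp (- lm * D)"
proof -
  define P where "P = \<bar>\<Prod>\<nu>\<in>{l..<k}. 1 - dlt \<theta> \<nu> * a\<bar>"
  define lo where "lo = (if l = k then 0 else sk \<theta> (k - 1) - sk \<theta> l)"
  define hi where "hi = sk \<theta> k - sk \<theta> (l - 1)"
  have "lo < hi"
    unfolding lo_def hi_def using sk_less[of "k - 1" k] sk_less[of "l - 1" l] by simp
  have "P * exp (- a * D) \<le> Kc * exp (- lm * D)" if D: "D \<in> {lo<..<hi}" for D
  proof -
    obtain s \<tau> where s\<tau>: "six \<theta> s = k" "six \<theta> \<tau> = l" "s - \<tau> = D"
      using six_pair_with_gap[OF \<open>l \<le> k\<close>] D unfolding lo_def hi_def by auto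
    have "{l..k - 1} = {l..<k}" by auto
    then have "uf \<theta> a s \<tau> = exp (- a * D) * (\<Prod>\<nu>\<in>{l..<k}. 1 - dlt \<theta> \<nu> * a)"
      unfolding uf_def s\<tau> by simp
    moreover have "0 \<le> lo" unfolding lo_def using sk_mono[of l "k - 1"] \<open>l \<le> k\<close> by auto
    ultimately show ?thesis
      using uf_le[of \<tau> s] s\<tau>(3) D unfolding P_def by (simp add: abs_mult mult.commute)
  qed
  then have "closure {lo<..<hi} \<subseteq> {D. P * exp (- a * D) \<le> Kc * exp (- lm * D)}"
    by (intro closure_minimal closed_Collect_le continuous_intros) auto
  moreover have "D \<in> closure {lo<..<hi}"
    using \<open>lo < hi\<close> assms(3-5) unfolding lo_def hi_def by auto
  ultimately show ?thesis unfolding P_def by auto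
qed

definition kfactor :: "real \<Rightarrow> real \<Rightarrow> real" where
  "kfactor Kc \<nu> = Kc / \<nu> + real p * dmax \<theta> p * Kc / (1 - exp (- \<nu> * psi_om \<theta> p))"

lemma kfactor_nonneg: "0 \<le> Kc \<Longrightarrow> 0 < \<nu> \<Longrightarrow> 0 \<le> kfactor Kc \<nu>"
  unfolding kfactor_def using psi_om_pos dmax_pos by (simp add: add_nonneg_nonneg divide_nonneg_pos)

text \<open>Every \<open>p\<close> consecutive indices advance \<open>sk\<close> by \<open>psi_om\<close>, so the terms are dominated by a
  geometric series in which each power occurs \<open>p\<close> times.\<close>

lemma sum_dlt_exp_le:
  assumes "0 < \<nu>" "sk \<theta> (k - 1) \<le> s"
  shows "(\<Sum>l\<in>{b..<k}. dlt \<theta> l * exp (- \<nu> * (s - sk \<theta> l)))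
           \<le> real p * dmax \<theta> p / (1 - exp (- \<nu> * psi_om \<theta> p))"
proof -
  define r where "r = exp (- \<nu> * psi_om \<theta> p)"
  have r: "0 \<le> r" "r < 1" unfolding r_def using assms(1) psi_om_pos by auto
  have "(\<Sum>l\<in>{b..<k}. dlt \<theta> l * exp (- \<nu> * (s - sk \<theta> l)))
        \<le> (\<Sum>l\<in>{b..<k}. dmax \<theta> p * exp (- \<nu> * (sk \<theta> (k - 1) - sk \<theta> l)))"
    using assms dlt_le_dmax dlt_pos dmax_pos by (intro sum_mono mult_mono) (auto simp: less_imp_le)
  also have "\<dots> = (\<Sum>j<nat (k - b). dmax \<theta> p * exp (- \<nu> * (sk \<theta> (k - 1) - sk \<theta> (k - 1 - int j))))"
    by (rule sum.reindex_bij_witness[where i = "\<lambda>j. k - 1 - int j" and j = "\<lambda>l. nat (k - 1 - l)"]) auto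
  also have "\<dots> \<le> (\<Sum>j<nat (k - b). dmax \<theta> p * r ^ (j div p))"
  proof (intro sum_mono mult_left_mono)
    fix j
    have "int p * int (j div p) \<le> int j"
      by (metis div_mult_self1_is_m div_le_dividend mult.commute of_nat_le_iff of_nat_mult
          times_div_less_eq_dividend)
    then have "sk \<theta> ((k - 1 - int j) + int p * int (j div p)) \<le> sk \<theta> (k - 1)" by (intro sk_mono) simp
    then have "real (j div p) * psi_om \<theta> p \<le> sk \<theta> (k - 1) - sk \<theta> (k - 1 - int j)"
      using sk_add_periods[of "k - 1 - int j" "j div p"] by simp
    then have "exp (- \<nu> * (sk \<theta> (k - 1) - sk \<theta> (k - 1 - int j))) \<le> exp (- \<nu> * (real (j div p) * psi_om \<theta> p))"
      using assms(1) by simp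
    also have "\<dots> = r ^ (j div p)" unfolding r_def by (simp add: exp_of_nat_mult[symmetric] algebra_simps)
    finally show "exp (- \<nu> * (sk \<theta> (k - 1) - sk \<theta> (k - 1 - int j))) \<le> r ^ (j div p)" .
  qed (use dmax_pos in auto)
  also have "\<dots> = dmax \<theta> p * (\<Sum>j<nat (k - b). r ^ (j div p))" by (simp add: sum_distrib_left)
  also have "\<dots> \<le> dmax \<theta> p * (real p / (1 - r))"
    using sum_power_div_le[OF r p_pos] dmax_pos by (intro mult_left_mono) auto
  finally show ?thesis unfolding r_def by (simp add: mult.commute)
qed

lemma ex_decay_rate:
  assumes "finite I" and \<nu>_pos: "\<And>q. q \<in> I \<Longrightarrow> 0 < \<nu> q"
    and less_1: "\<And>q. q \<in> I \<Longrightarrow> D q * kfactor (Kc q) (\<nu> q) < 1"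
  obtains \<mu> c where "0 < \<mu>" "c < 1" "\<And>q. q \<in> I \<Longrightarrow> \<mu> < \<nu> q \<and> D q * kfactor (Kc q) (\<nu> q - \<mu>) \<le> c"
proof -
  have "\<forall>\<^sub>F \<mu> in at_right 0. \<forall>q\<in>I. \<mu> < \<nu> q \<and> D q * kfactor (Kc q) (\<nu> q - \<mu>) < 1"
  proof (rule eventually_ball_finite[OF \<open>finite I\<close>], intro ballI eventually_conj)
    fix q assume q: "q \<in> I"
    have "1 - exp (- (\<nu> q - 0) * psi_om \<theta> p) \<noteq> 0" using \<nu>_pos[OF q] psi_om_pos by simp
    then have "((\<lambda>\<mu>. D q * kfactor (Kc q) (\<nu> q - \<mu>)) \<longlongrightarrow> D q * kfactor (Kc q) (\<nu> q - 0)) (at_right 0)"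
      unfolding kfactor_def using \<nu>_pos[OF q] by (intro tendsto_intros) auto
    then show "\<forall>\<^sub>F \<mu> in at_right 0. D q * kfactor (Kc q) (\<nu> q - \<mu>) < 1"
      using less_1[OF q] by (intro order_tendstoD(2)) auto
    show "\<forall>\<^sub>F \<mu> in at_right 0. \<mu> < \<nu> q"
      using \<nu>_pos[OF q] by (intro order_tendstoD(2)[OF tendsto_ident_at]) auto
  qed
  then obtain \<mu>0 where "0 < \<mu>0"
    "\<And>\<mu>. 0 < \<mu> \<Longrightarrow> \<mu> < \<mu>0 \<Longrightarrow> \<forall>q\<in>I. \<mu> < \<nu> q \<and> D q * kfactor (Kc q) (\<nu> q - \<mu>) < 1"
    unfolding eventually_at_right_field by blast
  then obtain \<mu> where \<mu>: "0 < \<mu>" "\<And>q. q \<in> I \<Longrightarrow> \<mu> < \<nu> q \<and> D q * kfactor (Kc q) (\<nu> q - \<mu>) < 1"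
    by (metis field_sum_of_halves half_gt_zero less_add_same_cancel1)
  define c where "c = Max (insert 0 ((\<lambda>q. D q * kfactor (Kc q) (\<nu> q - \<mu>)) ` I))"
  have "c < 1" unfolding c_def using \<open>finite I\<close> \<mu>(2) by (subst Max_less_iff) auto
  moreover have "D q * kfactor (Kc q) (\<nu> q - \<mu>) \<le> c" if "q \<in> I" for q
    unfolding c_def using \<open>finite I\<close> that by (intro Max_ge) auto
  ultimately show ?thesis using that \<mu> by blast
qed

lemma psi_seg_sub_le:
  assumes "k \<le> b + int N" "t \<in> seg k"
  shows "psi_seg k t - sk \<theta> (b - 1) \<le> real (N + 1) * psi_om \<theta> p"
proof -
  have "psi_seg k t \<le> sk \<theta> ((b - 1) + int (N + 1))"
    using psi_seg_bounds[OF assms(2)] sk_mono[of k "(b - 1) + int (N + 1)"] assms(1) by auto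
  also have "\<dots> \<le> sk \<theta> (b - 1) + real (card {(b-1)+1..(b-1)+int (N+1)}) * psi_om \<theta> p"
    unfolding sk_add_eq_sum_eta using eta_le_psi_om by (intro add_left_mono sum_bounded_above) auto
  finally show ?thesis by (simp add: algebra_simps)
qed

lemma psi_seg_sub_ge:
  assumes "b + int p * int j \<le> k" "t \<in> seg k"
  shows "real j * psi_om \<theta> p \<le> psi_seg k t - sk \<theta> (b - 1)"
  using sk_mono[of "(b - 1) + int p * int j" "k - 1"] sk_add_periods[of "b - 1" j]
    psi_seg_bounds[OF assms(2)] assms(1) by simp

lemma Tzero_between_segs:
  assumes "t \<in> {\<theta> (2*k0 - 1) .. \<theta> (2*(k0 + E))} \<inter> Tzero \<theta>"
  obtains k where "k0 \<le> k" "k \<le> k0 + E" "t \<in> seg k"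
proof -
  obtain k where k: "t \<in> seg k" using assms by (auto simp: Tzero_iff)
  then have "\<not> \<theta> (2*k) < \<theta> (2*k0 - 1)" "\<not> \<theta> (2*(k0 + E)) < \<theta> (2*k - 1)" using assms by auto
  then have "k0 \<le> k" "k \<le> k0 + E" unfolding theta_less_iff by presburger+
  then show ?thesis using that k by blast
qed

definition window_sup :: "real \<Rightarrow> int \<Rightarrow> nat \<Rightarrow> (real \<Rightarrow> real) \<Rightarrow> real" where
  "window_sup \<mu> b N w = Sup {exp (\<mu> * (psi_seg k t - sk \<theta> (b - 1))) * w t | k t.
      b \<le> k \<and> k \<le> b + int N \<and> t \<in> seg k}"

context
  fixes \<mu> B :: real and b :: int and N :: nat and w :: "real \<Rightarrow> real"
  assumes mu_nonneg: "0 \<le> \<mu>" and w_bounds: "\<And>t. t \<in> Tzero \<theta> \<Longrightarrow> 0 \<le> w t \<and> w t \<le> B"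
begin

lemma window_sup_upper:
  assumes "b \<le> k" "k \<le> b + int N" "t \<in> seg k"
  shows "exp (\<mu> * (psi_seg k t - sk \<theta> (b - 1))) * w t \<le> window_sup \<mu> b N w"
  unfolding window_sup_def
proof (rule cSup_upper)
  show "bdd_above {exp (\<mu> * (psi_seg k t - sk \<theta> (b - 1))) * w t | k t. b \<le> k \<and> k \<le> b + int N \<and> t \<in> seg k}"
  proof (rule bdd_aboveI, safe)
    fix k t assume "k \<le> b + int N" "t \<in> seg k"
    moreover have "t \<in> Tzero \<theta>" using \<open>t \<in> seg k\<close> unfolding Tzero_iff by blast
    ultimately show "exp (\<mu> * (psi_seg k t - sk \<theta> (b - 1))) * w t \<le> exp (\<mu> * (real (N + 1) * psi_om \<theta> p)) * B"
      using w_bounds psi_seg_sub_le mu_nonneg by (intro mult_mono) (auto intro: mult_left_mono)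
  qed
qed (use assms in blast)

lemma window_sup_nonneg: "0 \<le> window_sup \<mu> b N w"
  using window_sup_upper[of b "\<theta> (2*b)"] w_bounds[of "\<theta> (2*b)"] seg_right_mem[of b]
  unfolding Tzero_iff by (meson exp_ge_zero mult_nonneg_nonneg order.trans order_refl le_add_same_cancel1 of_nat_0_le_iff)

lemma le_window_sup_mult_exp:
  assumes "b \<le> k" "k \<le> b + int N" "t \<in> seg k"
  shows "w t \<le> window_sup \<mu> b N w * exp (- \<mu> * (psi_seg k t - sk \<theta> (b - 1)))"
proof -
  define e where "e = exp (\<mu> * (psi_seg k t - sk \<theta> (b - 1)))"
  have "w t = inverse e * (e * w t)" unfolding e_def by simp
  also have "\<dots> \<le> inverse e * window_sup \<mu> b N w"
    using window_sup_upper[OF assms] unfolding e_def by (intro mult_left_mono) simp_all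
  finally show ?thesis unfolding e_def by (simp add: exp_minus mult.commute)
qed

lemma window_sup_le:
  assumes "\<And>k t. b \<le> k \<Longrightarrow> k \<le> b + int N \<Longrightarrow> t \<in> seg k \<Longrightarrow>
             exp (\<mu> * (psi_seg k t - sk \<theta> (b - 1))) * w t \<le> R"
  shows "window_sup \<mu> b N w \<le> R"
  unfolding window_sup_def
proof (rule cSup_least)
  show "{exp (\<mu> * (psi_seg k t - sk \<theta> (b - 1))) * w t | k t. b \<le> k \<and> k \<le> b + int N \<and> t \<in> seg k} \<noteq> {}"
    using seg_right_mem[of b] by fastforce
qed (use assms in blast)

end

end

section \<open>Scalar linear impulsive equations\<close>

locale linear_impulsive_eq = periodic_time_scale +
  fixes a Kc lm :: real and b k1 :: int and y :: "real \<Rightarrow> real" and g :: "int \<Rightarrow> real \<Rightarrow> real"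
  assumes jump_factor_ne_0: "\<And>k. dlt \<theta> k * a \<noteq> 1"
    and uf_le: "\<And>s \<tau>. \<tau> \<le> s \<Longrightarrow> \<bar>uf \<theta> a s \<tau>\<bar> \<le> Kc * exp (- lm * (s - \<tau>))"
    and y_deriv: "\<And>k t. b \<le> k \<Longrightarrow> k \<le> k1 \<Longrightarrow> t \<in> seg k \<Longrightarrow>
        (y has_real_derivative (- a * y t + g k t)) (at t within seg k)"
    and y_jump: "\<And>k. b \<le> k \<Longrightarrow> k < k1 \<Longrightarrow>
        y (\<theta> (2*k + 1)) = (1 - dlt \<theta> k * a) * y (\<theta> (2*k)) + dlt \<theta> k * g k (\<theta> (2*k))"
begin

abbreviation s0 :: real where "s0 \<equiv> sk \<theta> (b - 1)"

text \<open>\<open>evol\<close> is the solution of the homogeneous equation with value 1 at \<open>\<theta> (2*b - 1)\<close>; its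
  quotients \<open>evol k t / evol l \<tau>\<close> are the paper's \<open>u (\<psi> t, \<psi> \<tau>)\<close>.\<close>

definition evol :: "int \<Rightarrow> real \<Rightarrow> real" where
  "evol k t = exp (- a * (psi_seg k t - s0)) * (\<Prod>\<nu>\<in>{b..<k}. 1 - dlt \<theta> \<nu> * a)"

lemma evol_ne_zero: "evol k t \<noteq> 0"
  unfolding evol_def using jump_factor_ne_0 by (simp add: prod_zero_iff)

lemma evol_start: "evol b (\<theta> (2*b - 1)) = 1"
  unfolding evol_def by simp

lemma evol_jump: "b \<le> k \<Longrightarrow> evol (k + 1) (\<theta> (2*k + 1)) = (1 - dlt \<theta> k * a) * evol k (\<theta> (2*k))"
  unfolding evol_def by (simp add: psi_seg_next atLeastLessThan_int_plus1_insert)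

lemma evol_quotient_le:
  assumes "b \<le> l" "l \<le> k" "\<tau> \<in> seg l" "t \<in> seg k" "l < k \<or> \<tau> \<le> t"
  shows "0 \<le> psi_seg k t - psi_seg l \<tau>"
    and "\<bar>evol k t / evol l \<tau>\<bar> \<le> Kc * exp (- lm * (psi_seg k t - psi_seg l \<tau>))"
proof -
  define D where "D = psi_seg k t - psi_seg l \<tau>"
  have bounds: "sk \<theta> (l - 1) \<le> psi_seg l \<tau>" "psi_seg l \<tau> \<le> sk \<theta> l"
    "sk \<theta> (k - 1) \<le> psi_seg k t" "psi_seg k t \<le> sk \<theta> k"
    using psi_seg_bounds assms(3,4) by blast+
  show "0 \<le> psi_seg k t - psi_seg l \<tau>"
    using assms(2,5) bounds sk_mono[of l "k - 1"] unfolding psi_seg_def by force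
  have "{b..<k} = {b..<l} \<union> {l..<k}" "{b..<l} \<inter> {l..<k} = {}" using assms(1,2) by auto
  then have "evol k t / evol l \<tau> = exp (- a * D) * (\<Prod>\<nu>\<in>{l..<k}. 1 - dlt \<theta> \<nu> * a)"
    using evol_ne_zero[of l \<tau>] jump_factor_ne_0
    unfolding evol_def D_def by (simp add: prod.union_disjoint prod_zero_iff field_simps
        flip: exp_add exp_diff)
  moreover have "\<bar>\<Prod>\<nu>\<in>{l..<k}. 1 - dlt \<theta> \<nu> * a\<bar> * exp (- a * D) \<le> Kc * exp (- lm * D)"
    by (rule prod_exp_le_of_uf_le[OF uf_le])
       (use assms(2) bounds \<open>0 \<le> psi_seg k t - psi_seg l \<tau>\<close> in \<open>auto simp: D_def\<close>)
  ultimately show "\<bar>evol k t / evol l \<tau>\<bar> \<le> Kc * exp (- lm * (psi_seg k t - psi_seg l \<tau>))"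
    by (simp add: abs_mult mult.commute D_def)
qed

lemma has_integral_forcing_quotient:
  assumes "b \<le> k" "k \<le> k1" "t \<in> seg k"
  shows "((\<lambda>\<tau>. g k \<tau> / evol k \<tau>) has_integral
           (y t / evol k t - y (\<theta> (2*k - 1)) / evol k (\<theta> (2*k - 1)))) {\<theta> (2*k - 1)..t}"
proof -
  define c where "c = exp (- a * (sk \<theta> k - \<theta> (2*k) - s0)) * (\<Prod>\<nu>\<in>{b..<k}. 1 - dlt \<theta> \<nu> * a)"
  have evol_eq: "evol k \<tau> = c * exp (- a * \<tau>)" for \<tau>
    unfolding evol_def c_def psi_seg_def by (simp add: algebra_simps flip: exp_add)
  have "c \<noteq> 0" using evol_ne_zero[of k 0] unfolding evol_eq by simp
  then show ?thesis unfolding evol_eq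
    using assms y_deriv by (intro has_integral_linear_ode_quotient[of _ t "\<theta> (2*k)"]) auto
qed

lemma y_evol_quotient_jump:
  assumes "b \<le> i" "i < k1"
  shows "y (\<theta> (2*i + 1)) / evol (i + 1) (\<theta> (2*i + 1))
    = y (\<theta> (2*i)) / evol i (\<theta> (2*i)) + dlt \<theta> i * g i (\<theta> (2*i)) / evol (i + 1) (\<theta> (2*i + 1))"
proof -
  have "1 - dlt \<theta> i * a \<noteq> 0" using jump_factor_ne_0[of i] by simp
  then have "((1 - dlt \<theta> i * a) * y (\<theta> (2*i)) + dlt \<theta> i * g i (\<theta> (2*i)))
          / ((1 - dlt \<theta> i * a) * evol i (\<theta> (2*i)))
      = y (\<theta> (2*i)) / evol i (\<theta> (2*i))
        + dlt \<theta> i * g i (\<theta> (2*i)) / ((1 - dlt \<theta> i * a) * evol i (\<theta> (2*i)))"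
    by (simp add: add_divide_distrib)
  then show ?thesis using y_jump[OF assms] evol_jump[OF assms(1)] by simp
qed

lemma variation_of_constants:
  assumes "b \<le> k" "k \<le> k1" "t \<in> seg k"
  shows "y t / evol k t = y (\<theta> (2*b - 1))
           + (\<Sum>l\<in>{b..<k}. integral (seg l) (\<lambda>\<tau>. g l \<tau> / evol l \<tau>)
                 + dlt \<theta> l * g l (\<theta> (2*l)) / evol (l + 1) (\<theta> (2*l + 1)))
           + integral {\<theta> (2*k - 1)..t} (\<lambda>\<tau>. g k \<tau> / evol k \<tau>)"
  using assms
proof (induction k arbitrary: t rule: int_ge_induct)
  case base
  then show ?case using has_integral_forcing_quotient[of b t] evol_start
    by (simp add: integral_unique)
next
  case (step i)
  have seg_eq: "{\<theta> (2*(i+1) - 1)..t} = {\<theta> (2*i + 1)..t}" by (simp add: algebra_simps)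
  have "i < k1" using step by simp
  note y_evol_quotient_jump[OF step(1) this]
  moreover have "integral {\<theta> (2*i + 1)..t} (\<lambda>\<tau>. g (i+1) \<tau> / evol (i+1) \<tau>)
      = y t / evol (i + 1) t - y (\<theta> (2*i + 1)) / evol (i + 1) (\<theta> (2*i + 1))"
    using has_integral_forcing_quotient[of "i + 1" t] step by (simp add: integral_unique algebra_simps)
  moreover have "(\<Sum>l\<in>{b..<i+1}. integral (seg l) (\<lambda>\<tau>. g l \<tau> / evol l \<tau>)
                 + dlt \<theta> l * g l (\<theta> (2*l)) / evol (l + 1) (\<theta> (2*l + 1)))
      = (\<Sum>l\<in>{b..<i}. integral (seg l) (\<lambda>\<tau>. g l \<tau> / evol l \<tau>)
                 + dlt \<theta> l * g l (\<theta> (2*l)) / evol (l + 1) (\<theta> (2*l + 1)))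
        + integral (seg i) (\<lambda>\<tau>. g i \<tau> / evol i \<tau>)
        + dlt \<theta> i * g i (\<theta> (2*i)) / evol (i + 1) (\<theta> (2*i + 1))"
    using step by (simp add: atLeastLessThan_int_plus1_insert)
  moreover note step.IH[OF _ seg_right_mem[of i]]
  ultimately show ?case using step unfolding seg_eq by simp
qed

end

locale linear_impulsive_estimate = linear_impulsive_eq +
  fixes c1 c2 \<mu> :: real
  assumes g_le: "\<And>k t. b \<le> k \<Longrightarrow> k \<le> k1 \<Longrightarrow> t \<in> seg k \<Longrightarrow>
        \<bar>g k t\<bar> \<le> c1 * exp (- \<mu> * (psi_seg k t - s0)) + c2"
    and mu_nonneg: "0 \<le> \<mu>" and mu_less: "\<mu> < lm"
    and c1_nonneg: "0 \<le> c1" and c2_nonneg: "0 \<le> c2" and Kc_nonneg: "0 \<le> Kc"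
begin

definition weight :: "real \<Rightarrow> real \<Rightarrow> real" where
  "weight s u = Kc * exp (- lm * (s - u)) * (c1 * exp (- \<mu> * (u - s0)) + c2)"

definition weight_prim :: "real \<Rightarrow> real \<Rightarrow> real" where
  "weight_prim s u = Kc * c1 * exp (- \<mu> * (s - s0)) * exp (- (lm - \<mu>) * (s - u)) / (lm - \<mu>)
                    + Kc * c2 * exp (- lm * (s - u)) / lm"

lemma weight_eq:
  "weight s u = Kc * c1 * exp (- \<mu> * (s - s0)) * exp (- (lm - \<mu>) * (s - u)) + Kc * c2 * exp (- lm * (s - u))"
proof -
  have "exp (- lm * (s - u)) * exp (- \<mu> * (u - s0)) = exp (- \<mu> * (s - s0)) * exp (- (lm - \<mu>) * (s - u))"
    unfolding mult_exp_exp by (simp add: algebra_simps)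
  then show ?thesis unfolding weight_def by (simp add: algebra_simps)
qed

lemma weight_prim_deriv: "(weight_prim s has_real_derivative weight s u) (at u)"
proof -
  have exp_deriv: "((\<lambda>u. exp (- \<nu> * (s - u))) has_real_derivative exp (- \<nu> * (s - u)) * \<nu>) (at u)"
    for \<nu> by (auto intro!: derivative_eq_intros)
  have "lm - \<mu> \<noteq> 0" "lm \<noteq> 0" using mu_nonneg mu_less by auto
  moreover have "(weight_prim s has_real_derivative
      Kc * c1 * exp (- \<mu> * (s - s0)) * (exp (- (lm - \<mu>) * (s - u)) * (lm - \<mu>)) / (lm - \<mu>)
      + Kc * c2 * (exp (- lm * (s - u)) * lm) / lm) (at u)"
    unfolding weight_prim_def by (intro DERIV_add DERIV_cdivide DERIV_cmult exp_deriv)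
  ultimately show ?thesis by (simp add: weight_eq mult.assoc)
qed

lemma weight_prim_nonneg: "0 \<le> weight_prim s u"
  unfolding weight_prim_def using mu_nonneg mu_less c1_nonneg c2_nonneg Kc_nonneg
  by (intro add_nonneg_nonneg divide_nonneg_pos) auto

lemma has_integral_weight_psi_seg:
  assumes "x \<in> seg l"
  shows "((\<lambda>\<tau>. weight s (psi_seg l \<tau>)) has_integral
           (weight_prim s (psi_seg l x) - weight_prim s (sk \<theta> (l - 1)))) {\<theta> (2*l - 1)..x}"
proof -
  have "((\<lambda>\<tau>. weight_prim s (psi_seg l \<tau>)) has_real_derivative weight s (psi_seg l \<tau>) * 1)
          (at \<tau> within {\<theta> (2*l - 1)..x})" for \<tau>
    by (rule DERIV_chain2[OF weight_prim_deriv]) (auto simp: psi_seg_def intro!: derivative_eq_intros)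
  then have "((\<lambda>\<tau>. weight s (psi_seg l \<tau>)) has_integral
      (weight_prim s (psi_seg l x) - weight_prim s (psi_seg l (\<theta> (2*l - 1))))) {\<theta> (2*l - 1)..x}"
    using assms by (intro fundamental_theorem_of_calculus)
      (auto simp: has_real_derivative_iff_has_vector_derivative)
  then show ?thesis by simp
qed

lemma forcing_quotient_le:
  assumes "b \<le> l" "l \<le> k" "k \<le> k1" "\<tau> \<in> seg l" "t \<in> seg k" "l < k \<or> \<tau> \<le> t"
  shows "\<bar>evol k t * (g l \<tau> / evol l \<tau>)\<bar> \<le> weight (psi_seg k t) (psi_seg l \<tau>)"
proof -
  have "\<bar>evol k t * (g l \<tau> / evol l \<tau>)\<bar> = \<bar>evol k t / evol l \<tau>\<bar> * \<bar>g l \<tau>\<bar>" by (simp add: abs_mult)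
  also have "\<dots> \<le> (Kc * exp (- lm * (psi_seg k t - psi_seg l \<tau>))) * (c1 * exp (- \<mu> * (psi_seg l \<tau> - s0)) + c2)"
    using evol_quotient_le(2)[OF assms(1,2,4,5,6)] g_le[of l \<tau>] assms Kc_nonneg
    by (intro mult_mono) auto
  finally show ?thesis unfolding weight_def .
qed

lemma integral_term_le:
  assumes "b \<le> l" "l \<le> k" "k \<le> k1" "x \<in> seg l" "t \<in> seg k" "l < k \<or> x \<le> t"
  shows "\<bar>evol k t\<bar> * \<bar>integral {\<theta> (2*l - 1)..x} (\<lambda>\<tau>. g l \<tau> / evol l \<tau>)\<bar>
           \<le> weight_prim (psi_seg k t) (psi_seg l x) - weight_prim (psi_seg k t) (sk \<theta> (l - 1))"
proof (rule has_integral_abs_mult_le[OF _ has_integral_weight_psi_seg[OF assms(4)]])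
  show "((\<lambda>\<tau>. g l \<tau> / evol l \<tau>) has_integral integral {\<theta> (2*l - 1)..x} (\<lambda>\<tau>. g l \<tau> / evol l \<tau>))
          {\<theta> (2*l - 1)..x}"
    using has_integral_forcing_quotient[of l x] assms by (auto intro: has_integral_integrable)
  fix \<tau> assume "\<tau> \<in> {\<theta> (2*l - 1)..x}"
  then show "\<bar>evol k t * (g l \<tau> / evol l \<tau>)\<bar> \<le> weight (psi_seg k t) (psi_seg l \<tau>)"
    using assms by (intro forcing_quotient_le) auto
qed

lemma jump_term_le:
  assumes "b \<le> l" "l < k" "k \<le> k1" "t \<in> seg k"
  shows "\<bar>evol k t\<bar> * \<bar>dlt \<theta> l * g l (\<theta> (2*l)) / evol (l + 1) (\<theta> (2*l + 1))\<bar>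
           \<le> dlt \<theta> l * weight (psi_seg k t) (sk \<theta> l)"
proof -
  have mem: "\<theta> (2*l + 1) \<in> seg (l + 1)" using seg_left_mem[of "l + 1"] by (simp add: algebra_simps)
  have "l + 1 < k \<or> \<theta> (2*l + 1) \<le> t"
    using assms(2,4) by (cases "l + 1 = k") (auto simp: algebra_simps)
  then have quot: "\<bar>evol k t / evol (l + 1) (\<theta> (2*l + 1))\<bar> \<le> Kc * exp (- lm * (psi_seg k t - sk \<theta> l))"
    using evol_quotient_le(2)[OF _ _ mem assms(4)] assms psi_seg_next[of l] by simp
  have "\<bar>g l (\<theta> (2*l))\<bar> \<le> c1 * exp (- \<mu> * (sk \<theta> l - s0)) + c2"
    using g_le[OF assms(1) _ seg_right_mem] assms by simp
  then have bound: "\<bar>evol k t / evol (l + 1) (\<theta> (2*l + 1))\<bar> * \<bar>g l (\<theta> (2*l))\<bar>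
      \<le> weight (psi_seg k t) (sk \<theta> l)"
    unfolding weight_def using quot Kc_nonneg by (intro mult_mono) auto
  have eq: "\<bar>evol k t\<bar> * \<bar>dlt \<theta> l * g l (\<theta> (2*l)) / evol (l + 1) (\<theta> (2*l + 1))\<bar>
      = dlt \<theta> l * (\<bar>evol k t / evol (l + 1) (\<theta> (2*l + 1))\<bar> * \<bar>g l (\<theta> (2*l))\<bar>)"
    using dlt_pos[of l] by (simp add: abs_mult abs_divide mult_ac)
  show ?thesis unfolding eq by (rule mult_left_mono[OF bound]) (use dlt_pos[of l] in simp)
qed

lemma sum_jump_weight_le:
  assumes "sk \<theta> (k - 1) \<le> s"
  shows "(\<Sum>l\<in>{b..<k}. dlt \<theta> l * weight s (sk \<theta> l))
    \<le> Kc * c1 * exp (- \<mu> * (s - s0)) * (real p * dmax \<theta> p / (1 - exp (- (lm - \<mu>) * psi_om \<theta> p)))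
      + Kc * c2 * (real p * dmax \<theta> p / (1 - exp (- lm * psi_om \<theta> p)))"
proof -
  have "(\<Sum>l\<in>{b..<k}. dlt \<theta> l * weight s (sk \<theta> l))
      = Kc * c1 * exp (- \<mu> * (s - s0)) * (\<Sum>l\<in>{b..<k}. dlt \<theta> l * exp (- (lm - \<mu>) * (s - sk \<theta> l)))
        + Kc * c2 * (\<Sum>l\<in>{b..<k}. dlt \<theta> l * exp (- lm * (s - sk \<theta> l)))"
    unfolding weight_eq by (simp add: sum.distrib sum_distrib_left algebra_simps)
  also have "\<dots> \<le> Kc * c1 * exp (- \<mu> * (s - s0)) * (real p * dmax \<theta> p / (1 - exp (- (lm - \<mu>) * psi_om \<theta> p)))
      + Kc * c2 * (real p * dmax \<theta> p / (1 - exp (- lm * psi_om \<theta> p)))"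
    using assms mu_nonneg mu_less Kc_nonneg c1_nonneg c2_nonneg
    by (intro add_mono mult_left_mono sum_dlt_exp_le) auto
  finally show ?thesis .
qed

lemma abs_evol_le:
  assumes "b \<le> k" "t \<in> seg k"
  shows "\<bar>evol k t\<bar> \<le> Kc * exp (- lm * (psi_seg k t - s0))"
proof -
  have "b < k \<or> \<theta> (2*b - 1) \<le> t" using assms by (cases "b = k") auto
  then show ?thesis using evol_quotient_le(2)[OF order_refl assms(1) seg_left_mem assms(2)] evol_start
    by simp
qed

lemma segment_step_le:
  assumes "b \<le> l" "l < k" "k \<le> k1" "t \<in> seg k"
  shows "\<bar>evol k t\<bar> * \<bar>integral (seg l) (\<lambda>\<tau>. g l \<tau> / evol l \<tau>)
              + dlt \<theta> l * g l (\<theta> (2*l)) / evol (l + 1) (\<theta> (2*l + 1))\<bar>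
           \<le> (weight_prim (psi_seg k t) (sk \<theta> l) - weight_prim (psi_seg k t) (sk \<theta> (l - 1)))
              + dlt \<theta> l * weight (psi_seg k t) (sk \<theta> l)"
proof -
  have "\<bar>evol k t\<bar> * \<bar>integral (seg l) (\<lambda>\<tau>. g l \<tau> / evol l \<tau>)
              + dlt \<theta> l * g l (\<theta> (2*l)) / evol (l + 1) (\<theta> (2*l + 1))\<bar>
      \<le> \<bar>evol k t\<bar> * \<bar>integral (seg l) (\<lambda>\<tau>. g l \<tau> / evol l \<tau>)\<bar>
        + \<bar>evol k t\<bar> * \<bar>dlt \<theta> l * g l (\<theta> (2*l)) / evol (l + 1) (\<theta> (2*l + 1))\<bar>"
    unfolding distrib_left[symmetric] by (intro mult_left_mono abs_triangle_ineq) simp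
  then show ?thesis
    using integral_term_le[OF assms(1) less_imp_le[OF assms(2)] assms(3) seg_right_mem assms(4)]
      jump_term_le[OF assms] assms(2) by simp
qed

lemma abs_le_initial_plus_forcing:
  assumes k: "b \<le> k" "k \<le> k1" and t: "t \<in> seg k"
  defines "S \<equiv> psi_seg k t"
  shows "\<bar>y t\<bar> \<le> Kc * exp (- lm * (S - s0)) * \<bar>y (\<theta> (2*b - 1))\<bar> + weight_prim S S
           + (\<Sum>l\<in>{b..<k}. dlt \<theta> l * weight S (sk \<theta> l))"
proof -
  define J where "J l = integral (seg l) (\<lambda>\<tau>. g l \<tau> / evol l \<tau>)
                     + dlt \<theta> l * g l (\<theta> (2*l)) / evol (l + 1) (\<theta> (2*l + 1))" for l
  define IP where "IP = integral {\<theta> (2*k - 1)..t} (\<lambda>\<tau>. g k \<tau> / evol k \<tau>)"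
  have "y t = evol k t * (y (\<theta> (2*b - 1)) + (\<Sum>l\<in>{b..<k}. J l) + IP)"
    using variation_of_constants[OF k t] evol_ne_zero[of k t] unfolding J_def IP_def
    by (simp add: field_simps)
  then have "\<bar>y t\<bar> = \<bar>evol k t\<bar> * \<bar>y (\<theta> (2*b - 1)) + (\<Sum>l\<in>{b..<k}. J l) + IP\<bar>"
    by (simp add: abs_mult)
  also have "\<dots> \<le> \<bar>evol k t\<bar> * (\<bar>y (\<theta> (2*b - 1))\<bar> + (\<Sum>l\<in>{b..<k}. \<bar>J l\<bar>) + \<bar>IP\<bar>)"
  proof (rule mult_left_mono)
    show "\<bar>y (\<theta> (2*b - 1)) + (\<Sum>l\<in>{b..<k}. J l) + IP\<bar>
        \<le> \<bar>y (\<theta> (2*b - 1))\<bar> + (\<Sum>l\<in>{b..<k}. \<bar>J l\<bar>) + \<bar>IP\<bar>"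
      using abs_triangle_ineq[of "y (\<theta> (2*b - 1))" "\<Sum>l\<in>{b..<k}. J l"] sum_abs[of J "{b..<k}"]
        abs_triangle_ineq[of "y (\<theta> (2*b - 1)) + (\<Sum>l\<in>{b..<k}. J l)" IP] by linarith
  qed simp
  also have "\<dots> = \<bar>evol k t\<bar> * \<bar>y (\<theta> (2*b - 1))\<bar> + (\<Sum>l\<in>{b..<k}. \<bar>evol k t\<bar> * \<bar>J l\<bar>) + \<bar>evol k t\<bar> * \<bar>IP\<bar>"
    by (simp add: distrib_left sum_distrib_left)
  also have "\<dots> \<le> Kc * exp (- lm * (S - s0)) * \<bar>y (\<theta> (2*b - 1))\<bar>
      + (\<Sum>l\<in>{b..<k}. (weight_prim S (sk \<theta> l) - weight_prim S (sk \<theta> (l - 1))) + dlt \<theta> l * weight S (sk \<theta> l))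
      + (weight_prim S S - weight_prim S (sk \<theta> (k - 1)))"
  proof (intro add_mono mult_right_mono sum_mono)
    show "\<bar>evol k t\<bar> \<le> Kc * exp (- lm * (S - s0))" unfolding S_def by (rule abs_evol_le[OF k(1) t])
    fix l assume "l \<in> {b..<k}"
    then show "\<bar>evol k t\<bar> * \<bar>J l\<bar> \<le> (weight_prim S (sk \<theta> l) - weight_prim S (sk \<theta> (l - 1)))
        + dlt \<theta> l * weight S (sk \<theta> l)"
      unfolding J_def S_def by (intro segment_step_le k(2) t) auto
  qed (use integral_term_le[OF k(1) order_refl k(2) t t] in \<open>simp_all add: IP_def S_def\<close>)
  also have "(\<Sum>l\<in>{b..<k}. (weight_prim S (sk \<theta> l) - weight_prim S (sk \<theta> (l - 1))) + dlt \<theta> l * weight S (sk \<theta> l))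
      = weight_prim S (sk \<theta> (k - 1)) - weight_prim S s0 + (\<Sum>l\<in>{b..<k}. dlt \<theta> l * weight S (sk \<theta> l))"
    using sum_atLeastLessThan_int_telescope[OF k(1), of "\<lambda>l. weight_prim S (sk \<theta> l)"]
    by (simp add: sum.distrib)
  finally show ?thesis using weight_prim_nonneg[of S s0] by linarith
qed

lemma weighted_abs_le:
  assumes k: "b \<le> k" "k \<le> k1" and t: "t \<in> seg k"
  shows "exp (\<mu> * (psi_seg k t - s0)) * \<bar>y t\<bar>
           \<le> Kc * \<bar>y (\<theta> (2*b - 1))\<bar> + c1 * kfactor Kc (lm - \<mu>)
             + c2 * exp (\<mu> * (psi_seg k t - s0)) * kfactor Kc lm"
proof -
  define S where "S = psi_seg k t"
  define E where "E = exp (\<mu> * (S - s0))"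
  have S: "sk \<theta> (k - 1) \<le> S" "s0 \<le> S"
    using psi_seg_bounds[OF t] sk_mono[of "b - 1" "k - 1"] k unfolding S_def by auto
  have "\<bar>y t\<bar> \<le> Kc * exp (- lm * (S - s0)) * \<bar>y (\<theta> (2*b - 1))\<bar>
      + c1 * exp (- \<mu> * (S - s0)) * kfactor Kc (lm - \<mu>) + c2 * kfactor Kc lm"
    using abs_le_initial_plus_forcing[OF k t] sum_jump_weight_le[OF S(1)]
    unfolding S_def[symmetric] weight_prim_def kfactor_def by (simp add: algebra_simps)
  then have "E * \<bar>y t\<bar> \<le> E * (Kc * exp (- lm * (S - s0)) * \<bar>y (\<theta> (2*b - 1))\<bar>
      + c1 * exp (- \<mu> * (S - s0)) * kfactor Kc (lm - \<mu>) + c2 * kfactor Kc lm)"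
    unfolding E_def by (rule mult_left_mono) simp
  also have "\<dots> = Kc * \<bar>y (\<theta> (2*b - 1))\<bar> * exp (- ((lm - \<mu>) * (S - s0)))
      + c1 * kfactor Kc (lm - \<mu>) + c2 * E * kfactor Kc lm"
    unfolding E_def by (simp add: algebra_simps flip: exp_add)
  also have "\<dots> \<le> Kc * \<bar>y (\<theta> (2*b - 1))\<bar> * 1 + c1 * kfactor Kc (lm - \<mu>) + c2 * E * kfactor Kc lm"
    using mult_left_mono[of "exp (- ((lm - \<mu>) * (S - s0)))" 1 "Kc * \<bar>y (\<theta> (2*b - 1))\<bar>"]
      S(2) mu_less Kc_nonneg by simp
  finally show ?thesis unfolding E_def S_def by simp
qed

end

section \<open>The cellular neural network\<close>

locale cnn = periodic_time_scale \<theta> p \<omega> for \<theta> p \<omega> +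
  fixes m n r :: nat and a K :: "nat \<times> nat \<Rightarrow> real" and C :: "nat \<times> nat \<Rightarrow> nat \<times> nat \<Rightarrow> real"
    and f :: "real \<Rightarrow> real" and Mf Lf :: real
  assumes mn: "1 \<le> m" "1 \<le> n"
    and C_nonneg: "\<And>q hl. 0 \<le> C q hl"
    and jump_factor_ne_0: "\<And>q k. q \<in> idxset m n \<Longrightarrow> dlt \<theta> k * a q \<noteq> 1"
    and lam_pos: "\<And>q. q \<in> idxset m n \<Longrightarrow> 0 < lam \<theta> p (a q)"
    and f_bounded: "\<And>s. \<bar>f s\<bar> \<le> Mf"
    and f_lipschitz: "\<And>s1 s2. \<bar>f s1 - f s2\<bar> \<le> Lf * \<bar>s1 - s2\<bar>" and Lf_nonneg: "0 \<le> Lf"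
    and K_pos: "\<And>q. q \<in> idxset m n \<Longrightarrow> 0 < K q"
    and uf_le: "\<And>q s \<tau>. q \<in> idxset m n \<Longrightarrow> \<tau> \<le> s \<Longrightarrow>
        \<bar>uf \<theta> (a q) s \<tau>\<bar> \<le> K q * exp (- lam \<theta> p (a q) * (s - \<tau>))"
begin

definition nonlin :: "vec \<Rightarrow> nat \<times> nat \<Rightarrow> real" where
  "nonlin v q = (\<Sum>hl\<in>nbhd m n r q. C q hl * f (v hl)) * v q"

lemma Mf_nonneg: "0 \<le> Mf"
  using f_bounded[of 0] by linarith

lemma bound_nonneg:
  assumes "\<forall>t\<in>Tzero \<theta>. vnorm m n (x t) \<le> H"
  shows "0 \<le> H"
proof -
  have "\<theta> (2*0) \<in> Tzero \<theta>" using seg_right_mem[of 0] unfolding Tzero_iff by blast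
  then show ?thesis using assms vnorm_nonneg[OF mn, of "x (\<theta> (2*0))"] by fastforce
qed

lemma sol_diff_linear_impulsive:
  assumes "is_sol \<theta> m n r a C f \<zeta> x" "is_sol \<theta> m n r a C f \<zeta>' x'" "q \<in> idxset m n"
  shows "linear_impulsive_eq \<theta> p \<omega> (a q) (K q) (lam \<theta> p (a q)) b k1 (\<lambda>t. x t q - x' t q)
           (\<lambda>k t. nonlin (x' t) q - nonlin (x t) q + (\<zeta> k q - \<zeta>' k q))"
proof (intro linear_impulsive_eq.intro periodic_time_scale_axioms linear_impulsive_eq_axioms.intro)
  show "dlt \<theta> k * a q \<noteq> 1" for k using jump_factor_ne_0 assms(3) by blast
  show "\<bar>uf \<theta> (a q) s \<tau>\<bar> \<le> K q * exp (- lam \<theta> p (a q) * (s - \<tau>))" if "\<tau> \<le> s" for s \<tau>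
    using uf_le assms(3) that by blast
  fix k t assume "t \<in> seg k"
  then have "((\<lambda>t. x t q) has_real_derivative - a q * x t q - nonlin (x t) q + \<zeta> k q) (at t within seg k)"
    "((\<lambda>t. x' t q) has_real_derivative - a q * x' t q - nonlin (x' t) q + \<zeta>' k q) (at t within seg k)"
    using assms unfolding is_sol_def nonlin_def by blast+
  from DERIV_diff[OF this]
  show "((\<lambda>t. x t q - x' t q) has_real_derivative
      - a q * (x t q - x' t q) + (nonlin (x' t) q - nonlin (x t) q + (\<zeta> k q - \<zeta>' k q))) (at t within seg k)"
    by (simp add: algebra_simps)
next
  fix k
  show "x (\<theta> (2*k + 1)) q - x' (\<theta> (2*k + 1)) q
      = (1 - dlt \<theta> k * a q) * (x (\<theta> (2*k)) q - x' (\<theta> (2*k)) q)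
        + dlt \<theta> k * (nonlin (x' (\<theta> (2*k))) q - nonlin (x (\<theta> (2*k))) q + (\<zeta> k q - \<zeta>' k q))"
    using assms unfolding is_sol_def nonlin_def by (simp add: algebra_simps)
qed

text \<open>On the ball of radius \<open>H\<close> the nonlinearity is Lipschitz with constant
  \<open>(Mf + H * Lf) * csum m n r C q\<close>, so the difference of two solutions solves a scalar linear
  impulsive equation whose forcing is bounded by the weighted difference and the input gap.\<close>

lemma sol_diff_weighted_component_le:
  assumes sol: "is_sol \<theta> m n r a C f \<zeta> x" "is_sol \<theta> m n r a C f \<zeta>' x'"
    and bounded: "\<forall>t\<in>Tzero \<theta>. vnorm m n (x t) \<le> H" "\<forall>t\<in>Tzero \<theta>. vnorm m n (x' t) \<le> H"
    and inputs: "\<And>k. b \<le> k \<Longrightarrow> k \<le> b + int N \<Longrightarrow> vnorm m n (\<zeta> k - \<zeta>' k) \<le> \<eta>"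
    and weighted: "\<And>k t. b \<le> k \<Longrightarrow> k \<le> b + int N \<Longrightarrow> t \<in> seg k \<Longrightarrow>
        vnorm m n (x t - x' t) \<le> V * exp (- \<mu> * (psi_seg k t - sk \<theta> (b - 1)))"
    and q: "q \<in> idxset m n" and \<mu>: "0 \<le> \<mu>" "\<mu> < lam \<theta> p (a q)" and "0 \<le> V" "0 \<le> \<eta>"
    and k: "b \<le> k" "k \<le> b + int N" and t: "t \<in> seg k"
  shows "exp (\<mu> * (psi_seg k t - sk \<theta> (b - 1))) * \<bar>x t q - x' t q\<bar>
           \<le> K q * \<bar>x (\<theta> (2*b - 1)) q - x' (\<theta> (2*b - 1)) q\<bar>
             + (Mf + H * Lf) * csum m n r C q * V * kfactor (K q) (lam \<theta> p (a q) - \<mu>)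
             + \<eta> * exp (\<mu> * (psi_seg k t - sk \<theta> (b - 1))) * kfactor (K q) (lam \<theta> p (a q))"
proof -
  have H: "0 \<le> H" by (rule bound_nonneg[OF bounded(1)])
  interpret linear_impulsive_estimate \<theta> p \<omega> "a q" "K q" "lam \<theta> p (a q)" b "b + int N"
    "\<lambda>t. x t q - x' t q" "\<lambda>k t. nonlin (x' t) q - nonlin (x t) q + (\<zeta> k q - \<zeta>' k q)"
    "(Mf + H * Lf) * csum m n r C q * V" \<eta> \<mu>
  proof (intro linear_impulsive_estimate.intro linear_impulsive_estimate_axioms.intro
      sol_diff_linear_impulsive[OF sol q])
    fix k t assume k: "b \<le> k" "k \<le> b + int N" and t: "t \<in> seg k"
    have "t \<in> Tzero \<theta>" using t unfolding Tzero_iff by blast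
    then have "\<bar>x' t q\<bar> \<le> H" using bounded(2) abs_le_vnorm[OF q, of "x' t"] by fastforce
    then have "\<bar>nonlin (x t) q - nonlin (x' t) q\<bar> \<le> (Mf + H * Lf) * csum m n r C q * vnorm m n (x t - x' t)"
      unfolding nonlin_def csum_def using q abs_le_vnorm[of _ m n "x t - x' t"]
      by (intro nonlinearity_difference_le f_bounded f_lipschitz Lf_nonneg C_nonneg)
         (auto simp: nbhd_def)
    also have "\<dots> \<le> (Mf + H * Lf) * csum m n r C q * (V * exp (- \<mu> * (psi_seg k t - sk \<theta> (b - 1))))"
      using weighted[OF k t] Mf_nonneg H Lf_nonneg C_nonneg
      by (intro mult_left_mono) (auto simp: csum_def sum_nonneg)
    moreover have "\<bar>\<zeta> k q - \<zeta>' k q\<bar> \<le> \<eta>"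
      using abs_le_vnorm[OF q, of "\<zeta> k - \<zeta>' k"] inputs[OF k] by simp
    ultimately show "\<bar>nonlin (x' t) q - nonlin (x t) q + (\<zeta> k q - \<zeta>' k q)\<bar>
        \<le> (Mf + H * Lf) * csum m n r C q * V * exp (- \<mu> * (psi_seg k t - sk \<theta> (b - 1))) + \<eta>"
      by (simp add: abs_minus_commute mult.assoc abs_triangle_ineq[THEN order_trans])
  qed (use \<mu> \<open>0 \<le> V\<close> \<open>0 \<le> \<eta>\<close> H Mf_nonneg Lf_nonneg C_nonneg K_pos[OF q] in
        \<open>auto simp: csum_def sum_nonneg less_imp_le\<close>)
  show ?thesis using weighted_abs_le[OF k t] by simp
qed

definition Kmax :: real where "Kmax = Max (K ` idxset m n)"

definition kfmax :: real where "kfmax = Max ((\<lambda>q. kfactor (K q) (lam \<theta> p (a q))) ` idxset m n)"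

lemma K_le_Kmax: "q \<in> idxset m n \<Longrightarrow> K q \<le> Kmax"
  unfolding Kmax_def by (simp add: finite_idxset)

lemma kfactor_le_kfmax: "q \<in> idxset m n \<Longrightarrow> kfactor (K q) (lam \<theta> p (a q)) \<le> kfmax"
  unfolding kfmax_def by (simp add: finite_idxset)

lemma Kmax_nonneg: "0 \<le> Kmax"
proof -
  obtain q where "q \<in> idxset m n" using idxset_nonempty[OF mn] by blast
  then show ?thesis using K_le_Kmax K_pos by (meson less_imp_le order_trans)
qed

lemma kfmax_nonneg: "0 \<le> kfmax"
proof -
  obtain q where q: "q \<in> idxset m n" using idxset_nonempty[OF mn] by blast
  then have "0 \<le> kfactor (K q) (lam \<theta> p (a q))" using K_pos lam_pos by (simp add: kfactor_nonneg less_imp_le)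
  then show ?thesis using kfactor_le_kfmax[OF q] by linarith
qed

lemma sol_diff_bounds_Tzero:
  assumes "\<forall>t\<in>Tzero \<theta>. vnorm m n (x t) \<le> H" "\<forall>t\<in>Tzero \<theta>. vnorm m n (x' t) \<le> H" "t \<in> Tzero \<theta>"
  shows "0 \<le> vnorm m n (x t - x' t) \<and> vnorm m n (x t - x' t) \<le> 2 * H"
proof -
  have "\<bar>x t q - x' t q\<bar> \<le> 2 * H" if "q \<in> idxset m n" for q
    using abs_le_vnorm[OF that, of "x t"] abs_le_vnorm[OF that, of "x' t"] assms
      abs_triangle_ineq4[of "x t q" "x' t q"] by fastforce
  then show ?thesis by (simp add: vnorm_le_iff[OF mn] vnorm_nonneg[OF mn])
qed

context
  fixes x x' :: "real \<Rightarrow> vec" and \<zeta> \<zeta>' :: "int \<Rightarrow> vec" and H \<eta> \<mu> c :: real and b :: int and N :: nat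
  assumes sol: "is_sol \<theta> m n r a C f \<zeta> x" "is_sol \<theta> m n r a C f \<zeta>' x'"
    and bounded: "\<forall>t\<in>Tzero \<theta>. vnorm m n (x t) \<le> H" "\<forall>t\<in>Tzero \<theta>. vnorm m n (x' t) \<le> H"
    and inputs: "\<And>k. b \<le> k \<Longrightarrow> k \<le> b + int N \<Longrightarrow> vnorm m n (\<zeta> k - \<zeta>' k) \<le> \<eta>"
    and eta_nonneg: "0 \<le> \<eta>" and mu_pos: "0 < \<mu>"
    and rate: "\<And>q. q \<in> idxset m n \<Longrightarrow> \<mu> < lam \<theta> p (a q)
        \<and> (Mf + H * Lf) * csum m n r C q * kfactor (K q) (lam \<theta> p (a q) - \<mu>) \<le> c"
begin

lemma window_sup_sol_diff_nonneg: "0 \<le> window_sup \<mu> b N (\<lambda>t. vnorm m n (x t - x' t))"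
  using mu_pos sol_diff_bounds_Tzero[OF bounded] by (intro window_sup_nonneg[where B = "2 * H"]) auto

lemma sol_diff_le_window_sup:
  assumes "b \<le> k" "k \<le> b + int N" "t \<in> seg k"
  shows "vnorm m n (x t - x' t)
           \<le> window_sup \<mu> b N (\<lambda>t. vnorm m n (x t - x' t)) * exp (- \<mu> * (psi_seg k t - sk \<theta> (b - 1)))"
  using mu_pos sol_diff_bounds_Tzero[OF bounded] assms
  by (intro le_window_sup_mult_exp[where B = "2 * H"]) auto

lemma weighted_sol_diff_le:
  defines "V \<equiv> window_sup \<mu> b N (\<lambda>t. vnorm m n (x t - x' t))"
  assumes k: "b \<le> k" "k \<le> b + int N" and t: "t \<in> seg k"
  shows "exp (\<mu> * (psi_seg k t - sk \<theta> (b - 1))) * vnorm m n (x t - x' t)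
           \<le> Kmax * (2 * H) + c * V + \<eta> * exp (\<mu> * (real (N + 1) * psi_om \<theta> p)) * kfmax"
proof -
  define e where "e = exp (\<mu> * (psi_seg k t - sk \<theta> (b - 1)))"
  define R where "R = Kmax * (2 * H) + c * V + \<eta> * exp (\<mu> * (real (N + 1) * psi_om \<theta> p)) * kfmax"
  have V: "0 \<le> V" unfolding V_def by (rule window_sup_sol_diff_nonneg)
  have seg_Tzero: "\<theta> (2*b - 1) \<in> Tzero \<theta>" using seg_left_mem[of b] unfolding Tzero_iff by blast
  have "e * \<bar>x t q - x' t q\<bar> \<le> R" if q: "q \<in> idxset m n" for q
  proof -
    have "e * \<bar>x t q - x' t q\<bar> \<le> K q * \<bar>x (\<theta> (2*b - 1)) q - x' (\<theta> (2*b - 1)) q\<bar>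
        + (Mf + H * Lf) * csum m n r C q * kfactor (K q) (lam \<theta> p (a q) - \<mu>) * V
        + \<eta> * e * kfactor (K q) (lam \<theta> p (a q))"
      using sol_diff_weighted_component_le[OF sol bounded inputs sol_diff_le_window_sup[folded V_def] q _ _ V
          eta_nonneg k t]
        rate[OF q] mu_pos unfolding e_def by (simp add: mult_ac)
    also have "\<dots> \<le> Kmax * (2 * H) + c * V + \<eta> * exp (\<mu> * (real (N + 1) * psi_om \<theta> p)) * kfmax"
    proof -
      have "\<bar>x (\<theta> (2*b - 1)) q - x' (\<theta> (2*b - 1)) q\<bar> \<le> 2 * H"
        using sol_diff_bounds_Tzero[OF bounded seg_Tzero] abs_le_vnorm[OF q, of "x (\<theta> (2*b - 1)) - x' (\<theta> (2*b - 1))"]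
        by simp
      then have t1: "K q * \<bar>x (\<theta> (2*b - 1)) q - x' (\<theta> (2*b - 1)) q\<bar> \<le> Kmax * (2 * H)"
        using K_le_Kmax[OF q] Kmax_nonneg by (intro mult_mono) simp_all
      have t2: "(Mf + H * Lf) * csum m n r C q * kfactor (K q) (lam \<theta> p (a q) - \<mu>) * V \<le> c * V"
        using rate[OF q] V by (intro mult_right_mono) simp_all
      have "e \<le> exp (\<mu> * (real (N + 1) * psi_om \<theta> p))"
        unfolding e_def using psi_seg_sub_le[OF k(2) t] mu_pos by simp
      then have "e * kfactor (K q) (lam \<theta> p (a q)) \<le> exp (\<mu> * (real (N + 1) * psi_om \<theta> p)) * kfmax"
        using kfactor_le_kfmax[OF q] kfactor_nonneg[of "K q" "lam \<theta> p (a q)"] K_pos[OF q] lam_pos[OF q]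
        by (intro mult_mono) simp_all
      then have t3: "\<eta> * e * kfactor (K q) (lam \<theta> p (a q)) \<le> \<eta> * exp (\<mu> * (real (N + 1) * psi_om \<theta> p)) * kfmax"
        using eta_nonneg by (simp add: mult.assoc mult_left_mono)
      from t1 t2 t3 show ?thesis by linarith
    qed
    finally show ?thesis unfolding R_def .
  qed
  then show ?thesis unfolding R_def[symmetric] e_def[symmetric]
    by (intro mult_vnorm_le[OF mn]) (simp_all add: e_def)
qed

lemma window_sup_sol_diff_le:
  assumes "c < 1"
  shows "window_sup \<mu> b N (\<lambda>t. vnorm m n (x t - x' t))
           \<le> (Kmax * (2 * H) + \<eta> * exp (\<mu> * (real (N + 1) * psi_om \<theta> p)) * kfmax) / (1 - c)"
proof -
  define V where "V = window_sup \<mu> b N (\<lambda>t. vnorm m n (x t - x' t))"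
  have "V \<le> Kmax * (2 * H) + c * V + \<eta> * exp (\<mu> * (real (N + 1) * psi_om \<theta> p)) * kfmax"
    unfolding V_def
  proof (rule window_sup_le[where B = "2 * H"])
    show "0 \<le> \<mu>" using mu_pos by simp
  qed (use sol_diff_bounds_Tzero[OF bounded] weighted_sol_diff_le in blast)+
  then have "V * (1 - c) \<le> Kmax * (2 * H) + \<eta> * exp (\<mu> * (real (N + 1) * psi_om \<theta> p)) * kfmax"
    by (simp add: algebra_simps)
  then show ?thesis using assms unfolding V_def[symmetric] by (simp add: pos_le_divide_eq)
qed

lemma sol_diff_decay_in_window:
  assumes "c < 1" "b + int p * int j \<le> k" "k \<le> b + int N" "t \<in> seg k"
  shows "vnorm m n (x t - x' t)
    \<le> (Kmax * (2 * H) + \<eta> * exp (\<mu> * (real (N + 1) * psi_om \<theta> p)) * kfmax) / (1 - c)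
        * exp (- (\<mu> * psi_om \<theta> p) * real j)"
proof -
  have "0 \<le> int p * int j" by simp
  then have "b \<le> k" using assms(2) by linarith
  have "vnorm m n (x t - x' t)
      \<le> window_sup \<mu> b N (\<lambda>t. vnorm m n (x t - x' t)) * exp (- \<mu> * (psi_seg k t - sk \<theta> (b - 1)))"
    using sol_diff_le_window_sup \<open>b \<le> k\<close> assms(3,4) by blast
  also have "\<dots> \<le> (Kmax * (2 * H) + \<eta> * exp (\<mu> * (real (N + 1) * psi_om \<theta> p)) * kfmax) / (1 - c)
      * exp (- \<mu> * (psi_seg k t - sk \<theta> (b - 1)))"
    using window_sup_sol_diff_le[OF assms(1)] by (rule mult_right_mono) simp
  also have "\<dots> \<le> (Kmax * (2 * H) + \<eta> * exp (\<mu> * (real (N + 1) * psi_om \<theta> p)) * kfmax) / (1 - c)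
      * exp (- (\<mu> * psi_om \<theta> p) * real j)"
    using psi_seg_sub_ge[OF assms(2,4)] mu_pos assms(1) Kmax_nonneg kfmax_nonneg eta_nonneg
      bound_nonneg[OF bounded(1)] by (intro mult_left_mono) (simp_all add: mult_ac)
  finally show ?thesis .
qed

end

lemma proximal_solutions:
  assumes \<Lambda>: "compact \<Lambda>" "\<Lambda> \<subseteq> Rmn m n" "continuous_on \<Lambda> F" "F ` \<Lambda> \<subseteq> \<Lambda>"
    and \<zeta>: "\<zeta> \<in> Theta \<Lambda> F" "\<zeta>' \<in> Theta \<Lambda> F"
    and liminf: "Liminf at_top (\<lambda>k::int. ereal (vnorm m n (\<zeta> k - \<zeta>' k))) = 0"
    and sol: "is_sol \<theta> m n r a C f \<zeta> x" "is_sol \<theta> m n r a C f \<zeta>' x'"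
    and bounded: "\<forall>t\<in>Tzero \<theta>. vnorm m n (x t) \<le> H" "\<forall>t\<in>Tzero \<theta>. vnorm m n (x' t) \<le> H"
    and contraction: "\<And>q. q \<in> idxset m n \<Longrightarrow>
        (Mf + H * Lf) * csum m n r C q * kfactor (K q) (lam \<theta> p (a q)) < 1"
    and "0 < \<epsilon>"
  shows "\<exists>k0. \<forall>t \<in> {\<theta> (2*k0 - 1) .. \<theta> (2*(k0 + int E))} \<inter> Tzero \<theta>. vnorm m n (x t - x' t) < \<epsilon>"
proof -
  obtain \<mu> c where \<mu>: "0 < \<mu>" "c < 1" and rate: "\<And>q. q \<in> idxset m n \<Longrightarrow> \<mu> < lam \<theta> p (a q)
      \<and> (Mf + H * Lf) * csum m n r C q * kfactor (K q) (lam \<theta> p (a q) - \<mu>) \<le> c"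
    using ex_decay_rate[where \<nu> = "\<lambda>q. lam \<theta> p (a q)" and D = "\<lambda>q. (Mf + H * Lf) * csum m n r C q",
        OF finite_idxset lam_pos contraction] by blast
  define A where "A = Kmax * (2 * H) / (1 - c)"
  have "0 \<le> A" unfolding A_def using \<mu>(2) Kmax_nonneg bound_nonneg[OF bounded(1)] by simp
  then obtain j :: nat where j: "exp (- (\<mu> * psi_om \<theta> p) * real j) * A < \<epsilon> / 2"
    using ex_nat_exp_decay_less[of A "\<mu> * psi_om \<theta> p" "\<epsilon> / 2"] \<mu>(1) psi_om_pos \<open>0 < \<epsilon>\<close> by auto
  define N where "N = p * j + E"
  define B where "B = exp (\<mu> * (real (N + 1) * psi_om \<theta> p)) * kfmax / (1 - c)"
  have "0 \<le> B" unfolding B_def using \<mu>(2) kfmax_nonneg by simp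
  then obtain \<eta> where \<eta>: "0 < \<eta>" "\<eta> * B < \<epsilon> / 2" using ex_pos_mult_less[of B "\<epsilon> / 2"] \<open>0 < \<epsilon>\<close> by auto
  obtain b where close: "\<And>k. b \<le> k \<Longrightarrow> k \<le> b + int N \<Longrightarrow> vnorm m n (\<zeta> k - \<zeta>' k) < \<eta>"
    using Theta_liminf_window_close[OF mn \<Lambda> \<zeta> liminf \<eta>(1)] by blast
  show ?thesis
  proof (intro exI[of _ "b + int p * int j"] ballI)
    fix t assume "t \<in> {\<theta> (2*(b + int p * int j) - 1) .. \<theta> (2*((b + int p * int j) + int E))} \<inter> Tzero \<theta>"
    then obtain k where k: "b + int p * int j \<le> k" "k \<le> b + int N" "t \<in> seg k"
      unfolding N_def by (rule Tzero_between_segs) (simp add: algebra_simps)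
    have "vnorm m n (x t - x' t) \<le> (A + \<eta> * B) * exp (- (\<mu> * psi_om \<theta> p) * real j)"
      using sol_diff_decay_in_window[OF sol bounded _ _ \<mu>(1) rate \<mu>(2) k] close \<eta>(1)
      unfolding A_def B_def by (simp add: less_imp_le add_divide_distrib mult.assoc)
    also have "\<dots> \<le> exp (- (\<mu> * psi_om \<theta> p) * real j) * A + \<eta> * B"
      using \<mu>(1) psi_om_pos \<eta>(1) \<open>0 \<le> B\<close> mult_left_le_one_le[of "\<eta> * B" "exp (- (\<mu> * psi_om \<theta> p) * real j)"]
      by (simp add: algebra_simps)
    finally show "vnorm m n (x t - x' t) < \<epsilon>" using j \<eta>(2) by linarith
  qed
qed

end

theorem lemma3:
  fixes m n r p :: nat and \<theta> :: "int \<Rightarrow> real" and \<omega> :: real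
    and a K :: "nat \<times> nat \<Rightarrow> real" and C :: "nat \<times> nat \<Rightarrow> nat \<times> nat \<Rightarrow> real"
    and f :: "real \<Rightarrow> real" and Mf Lf :: real
    and \<Lambda> :: "vec set" and F :: "vec \<Rightarrow> vec"
    and \<zeta> \<zeta>' :: "int \<Rightarrow> vec" and x x' :: "real \<Rightarrow> vec"
  assumes mn: "1 \<le> m" "1 \<le> n"
    and theta_mono: "strict_mono \<theta>" and theta_0: "\<theta> (-1) < 0" "0 < \<theta> 0"
    and period: "0 < \<omega>" "1 \<le> p" "\<And>k. \<theta> (k + 2 * int p) = \<theta> k + \<omega>"
    and a_pos: "\<And>q. q \<in> idxset m n \<Longrightarrow> 0 < a q"
    and C_nonneg: "\<And>q hl. 0 \<le> C q hl"
    and f_cont: "continuous_on UNIV f"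
    and Lam: "compact \<Lambda>" "\<Lambda> \<subseteq> Rmn m n" "continuous_on \<Lambda> F" "F ` \<Lambda> \<subseteq> \<Lambda>"
    and C1: "\<And>q k. q \<in> idxset m n \<Longrightarrow> dlt \<theta> k * a q \<noteq> 1"
    and C2: "0 < lammin \<theta> p m n a"
    and C3: "0 < Mf" "\<And>s. \<bar>f s\<bar> \<le> Mf"
    and C4: "0 < Lf" "\<And>s1 s2. \<bar>f s1 - f s2\<bar> \<le> Lf * \<bar>s1 - s2\<bar>"
    and K: "\<And>q. q \<in> idxset m n \<Longrightarrow> 0 < K q"
      "\<And>q s \<tau>. q \<in> idxset m n \<Longrightarrow> \<tau> \<le> s \<Longrightarrow>
          \<bar>uf \<theta> (a q) s \<tau>\<bar> \<le> K q * exp (- lam \<theta> p (a q) * (s - \<tau>))"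
    and C5: "(Mf + H0 \<theta> p m n r a C K Mf \<Lambda> F * Lf) * cbar \<theta> p m n r a C K < 1"
    and C6: "- lammin \<theta> p m n a + dbar \<theta> p m n r a C K Mf Lf \<Lambda> F
              + real p / psi_om \<theta> p * ln (1 + dmax \<theta> p * dbar \<theta> p m n r a C K Mf Lf \<Lambda> F) < 0"
    and zeta: "\<zeta> \<in> Theta \<Lambda> F" "\<zeta>' \<in> Theta \<Lambda> F"
    and liminf: "Liminf at_top (\<lambda>k::int. ereal (vnorm m n (\<zeta> k - \<zeta>' k))) = 0"
    and x: "is_sol \<theta> m n r a C f \<zeta> x"
      "\<forall>t\<in>Tzero \<theta>. vnorm m n (x t) \<le> H0 \<theta> p m n r a C K Mf \<Lambda> F"
    and x': "is_sol \<theta> m n r a C f \<zeta>' x'"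
      "\<forall>t\<in>Tzero \<theta>. vnorm m n (x' t) \<le> H0 \<theta> p m n r a C K Mf \<Lambda> F"
  shows "\<forall>\<epsilon>>0. \<forall>E::nat. \<exists>k0::int. \<forall>t \<in> {\<theta> (2*k0 - 1) .. \<theta> (2*(k0 + int E))} \<inter> Tzero \<theta>.
           vnorm m n (x t - x' t) < \<epsilon>"
proof -
  have lam_pos: "0 < lam \<theta> p (a q)" if "q \<in> idxset m n" for q
  proof -
    have "lammin \<theta> p m n a \<le> lam \<theta> p (a q)"
      unfolding lammin_def using that by (intro Min_le) (simp_all add: finite_idxset)
    then show ?thesis using C2 by simp
  qed
  interpret cnn \<theta> p \<omega> m n r a K C f Mf Lf
    by (unfold_locales; (fact theta_mono theta_0 period mn C_nonneg C1 C3(2) C4 K lam_pos)?)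
      (use C4(1) in simp)
  define H where "H = H0 \<theta> p m n r a C K Mf \<Lambda> F"
  have contraction: "(Mf + H * Lf) * csum m n r C q * kfactor (K q) (lam \<theta> p (a q)) < 1"
    if "q \<in> idxset m n" for q
  proof -
    have "kfactor (K q) (lam \<theta> p (a q)) * csum m n r C q \<le> cbar \<theta> p m n r a C K"
      unfolding cbar_def kfac_def kfactor_def using that by (intro Max_ge) (simp_all add: finite_idxset)
    moreover have "0 \<le> Mf + H * Lf" using C3(1) C4(1) bound_nonneg[OF x(2)] unfolding H_def by simp
    ultimately have "(Mf + H * Lf) * (kfactor (K q) (lam \<theta> p (a q)) * csum m n r C q)
        \<le> (Mf + H * Lf) * cbar \<theta> p m n r a C K"
      by (rule mult_left_mono)
    then show ?thesis using C5 unfolding H_def by (simp add: mult_ac)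
  qed
  show ?thesis
    using proximal_solutions[OF Lam zeta liminf x(1) x'(1) x(2)[folded H_def] x'(2)[folded H_def] contraction]
    by blast
qed

end
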